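(* Let $V$ be an infinite-dimensional left vector space over a field $K$. Then the Grassmann graph on $\mathcal G$ is not connected. More precisely, for $X\in\mathcal G$, the connected component of $X$ consists of those $Y\in\mathcal G$ with $\dim((X+Y)/X)=\dim((X+Y)/Y)=d$ for some integer $d\ge0$; in particular no complement of $X$ in $V$ and no $Y\in\mathcal G$ with $Y<X$ or $Y>X$ lies in this component (and such elements of $\mathcal G$ exist, e.g. every hyperplane of $X$ belongs to $\mathcal G$). Moreover, every connected component of the Grassmann graph has infinite diameter.
   Context: Fields are not necessarily commutative (division rings). $\mathcal G$ denotes the set of all subspaces $X\le V$ such that $X$ is isomorphic to $V/X$. Two elements $X,Y\in\mathcal G$ are adjacent if $\dim((X+Y)/X)=\dim((X+Y)/Y)=1$. The Grassmann graph on $\mathcal G$ has vertex set $\mathcal G$ and edges the pairs of adjacent elements. $Y<X$ denotes strict inclusion of subspaces. *)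

theory Defs
  imports Main
begin

text \<open>Left vector spaces over a (not necessarily commutative) division ring.
  The space V is the whole type 'v; scalars form a division_ring 'k; smul is
  left scalar multiplication.\<close>

definition left_vector_space :: "('k::division_ring \<Rightarrow> 'v::ab_group_add \<Rightarrow> 'v) \<Rightarrow> bool" where
  "left_vector_space smul \<longleftrightarrow>
     (\<forall>a x y. smul a (x + y) = smul a x + smul a y) \<and>
     (\<forall>a b x. smul (a + b) x = smul a x + smul b x) \<and>
     (\<forall>a b x. smul (a * b) x = smul a (smul b x)) \<and>
     (\<forall>x. smul 1 x = x)"

definition subspace :: "('k::division_ring \<Rightarrow> 'v::ab_group_add \<Rightarrow> 'v) \<Rightarrow> 'v set \<Rightarrow> bool" where
  "subspace smul X \<longleftrightarrow> 0 \<in> X \<and> (\<forall>x\<in>X. \<forall>y\<in>X. x + y \<in> X) \<and> (\<forall>a. \<forall>x\<in>X. smul a x \<in> X)"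

definition lspan :: "('k::division_ring \<Rightarrow> 'v::ab_group_add \<Rightarrow> 'v) \<Rightarrow> 'v set \<Rightarrow> 'v set" where
  "lspan smul S = \<Inter>{W. subspace smul W \<and> S \<subseteq> W}"

definition infinite_dimensional :: "('k::division_ring \<Rightarrow> 'v::ab_group_add \<Rightarrow> 'v) \<Rightarrow> bool" where
  "infinite_dimensional smul \<longleftrightarrow> \<not> (\<exists>S. finite S \<and> lspan smul S = UNIV)"

definition ssum :: "'v::ab_group_add set \<Rightarrow> 'v set \<Rightarrow> 'v set" where
  "ssum X Y = {x + y | x y. x \<in> X \<and> y \<in> Y}"

definition coset :: "'v::ab_group_add \<Rightarrow> 'v set \<Rightarrow> 'v set" where
  "coset v X = {v + x | x. x \<in> X}"

definition quotient_space :: "'v::ab_group_add set \<Rightarrow> 'v set set" where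
  "quotient_space X = {coset v X | v. True}"

definition qadd :: "'v::ab_group_add set \<Rightarrow> 'v set \<Rightarrow> 'v set" where
  "qadd A B = {a + b | a b. a \<in> A \<and> b \<in> B}"

definition qsmul :: "('k::division_ring \<Rightarrow> 'v::ab_group_add \<Rightarrow> 'v) \<Rightarrow> 'v set \<Rightarrow> 'k \<Rightarrow> 'v set \<Rightarrow> 'v set" where
  "qsmul smul X c A = {smul c a + x | a x. a \<in> A \<and> x \<in> X}"

definition iso_to_quotient :: "('k::division_ring \<Rightarrow> 'v::ab_group_add \<Rightarrow> 'v) \<Rightarrow> 'v set \<Rightarrow> bool" where
  "iso_to_quotient smul X \<longleftrightarrow>
     (\<exists>g. bij_betw g X (quotient_space X) \<and>
          (\<forall>x\<in>X. \<forall>y\<in>X. g (x + y) = qadd (g x) (g y)) \<and>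
          (\<forall>c. \<forall>x\<in>X. g (smul c x) = qsmul smul X c (g x)))"

definition GG :: "('k::division_ring \<Rightarrow> 'v::ab_group_add \<Rightarrow> 'v) \<Rightarrow> 'v set set" where
  "GG smul = {X. subspace smul X \<and> iso_to_quotient smul X}"

text \<open>qdim smul W X d: dim(W/X) = d (finite d), i.e. there are d vectors whose
  classes modulo X form a basis of W/X (they span W together with X and are
  linearly independent modulo X).\<close>
definition qdim :: "('k::division_ring \<Rightarrow> 'v::ab_group_add \<Rightarrow> 'v) \<Rightarrow> 'v set \<Rightarrow> 'v set \<Rightarrow> nat \<Rightarrow> bool" where
  "qdim smul W X d \<longleftrightarrow>
     (\<exists>v :: nat \<Rightarrow> 'v. lspan smul (X \<union> v ` {..<d}) = W \<and>
        (\<forall>c :: nat \<Rightarrow> 'k. (\<Sum>i<d. smul (c i) (v i)) \<in> X \<longrightarrow> (\<forall>i<d. c i = 0)))"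

definition adjacent :: "('k::division_ring \<Rightarrow> 'v::ab_group_add \<Rightarrow> 'v) \<Rightarrow> 'v set \<Rightarrow> 'v set \<Rightarrow> bool" where
  "adjacent smul X Y \<longleftrightarrow> qdim smul (ssum X Y) X 1 \<and> qdim smul (ssum X Y) Y 1"

definition grassmann_edge :: "('k::division_ring \<Rightarrow> 'v::ab_group_add \<Rightarrow> 'v) \<Rightarrow> 'v set \<Rightarrow> 'v set \<Rightarrow> bool" where
  "grassmann_edge smul X Y \<longleftrightarrow> X \<in> GG smul \<and> Y \<in> GG smul \<and> adjacent smul X Y"

definition component :: "('k::division_ring \<Rightarrow> 'v::ab_group_add \<Rightarrow> 'v) \<Rightarrow> 'v set \<Rightarrow> 'v set set" where
  "component smul X = {Y. (grassmann_edge smul)\<^sup>*\<^sup>* X Y}"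

definition dist_le :: "('k::division_ring \<Rightarrow> 'v::ab_group_add \<Rightarrow> 'v) \<Rightarrow> 'v set \<Rightarrow> 'v set \<Rightarrow> nat \<Rightarrow> bool" where
  "dist_le smul X Y n \<longleftrightarrow> (\<exists>k\<le>n. (grassmann_edge smul ^^ k) X Y)"

end

theory Submission
  imports Defs "HOL-Library.Equipollence"
begin

text \<open>Let d(X, Y) denote the common value of dim((X + Y)/X) and dim((X + Y)/Y) whenever both
  are finite and equal. Along an edge of the Grassmann graph this quantity is 1, and it behaves
  additively under towers of finite-codimensional extensions, so every vertex Y in the component
  of X has d(X, Y) defined and bounded by the graph distance. Conversely, if d(X, Y) = d > 0 one
  walks towards Y: pick x in X outside Y, y in Y outside X and a hyperplane H of X containing
  X \<inter> Y but not x; then X' = H + \<langle>y\<rangle> is adjacent to X and d(X', Y) = d - 1.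

  Membership in \<G> means that a basis of X and a basis of V modulo X are equipollent. In infinite
  dimension these bases are infinite, so the condition survives finite-dimensional modifications
  of X, which keeps all the intermediate subspaces in \<G>. For the same reason V/X is
  infinite-dimensional, so a complement of X is never in the component of X; and trading n basis
  vectors of X for n basis vectors of a complement produces vertices at distance n.\<close>

locale left_vs =
  fixes smul :: "'k::division_ring \<Rightarrow> 'v::ab_group_add \<Rightarrow> 'v"
  assumes left_vector_space: "left_vector_space smul"
begin

lemma smul_add_right: "smul a (x + y) = smul a x + smul a y"
  using left_vector_space unfolding left_vector_space_def by blast

lemma smul_add_left: "smul (a + b) x = smul a x + smul b x"
  using left_vector_space unfolding left_vector_space_def by blast

lemma smul_assoc: "smul (a * b) x = smul a (smul b x)"
  using left_vector_space unfolding left_vector_space_def by blast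

lemma smul_one [simp]: "smul 1 x = x"
  using left_vector_space unfolding left_vector_space_def by blast

lemma smul_zero_left [simp]: "smul 0 x = 0"
proof -
  have "smul 0 x + smul 0 x = smul 0 x + 0" using smul_add_left[of 0 0 x] by simp
  then show ?thesis by (rule add_left_imp_eq)
qed

lemma smul_zero_right [simp]: "smul a 0 = 0"
proof -
  have "smul a 0 + smul a 0 = smul a 0 + 0" using smul_add_right[of a 0 0] by simp
  then show ?thesis by (rule add_left_imp_eq)
qed

lemma smul_minus_right: "smul a (- x) = - smul a x"
proof -
  have "smul a x + smul a (- x) = 0" using smul_add_right[of a x "-x"] by simp
  then show ?thesis by (simp add: eq_neg_iff_add_eq_0 add.commute)
qed

lemma smul_minus_left: "smul (- a) x = - smul a x"
proof -
  have "smul a x + smul (- a) x = 0" using smul_add_left[of a "-a" x] by simp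
  then show ?thesis by (simp add: eq_neg_iff_add_eq_0 add.commute)
qed

lemma smul_minus_one: "smul (- 1) x = - x"
  by (simp only: smul_minus_left smul_one)

lemma smul_diff_left: "smul (a - b) x = smul a x - smul b x"
  by (simp only: diff_conv_add_uminus smul_add_left smul_minus_left)

lemma smul_sum_right: "smul a (\<Sum>i\<in>I. f i) = (\<Sum>i\<in>I. smul a (f i))"
  by (induction I rule: infinite_finite_induct) (auto simp: smul_add_right)

lemma smul_inverse_cancel: "a \<noteq> 0 \<Longrightarrow> smul (inverse a) (smul a x) = x"
  by (simp add: smul_assoc[symmetric])

lemma lincomb_extend:
  assumes "finite H" "G \<subseteq> H"
  shows "(\<Sum>s\<in>H. smul (if s \<in> G then c s else 0) (f s)) = (\<Sum>s\<in>G. smul (c s) (f s))"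
proof -
  have "(\<Sum>s\<in>H. smul (if s \<in> G then c s else 0) (f s)) = (\<Sum>s\<in>H. if s \<in> G then smul (c s) (f s) else 0)"
    by (rule sum.cong) auto
  also have "\<dots> = (\<Sum>s\<in>G. smul (c s) (f s))"
    using sum.inter_restrict[OF assms(1), of "\<lambda>s. smul (c s) (f s)" G] assms(2)
    by (simp add: Int_absorb1)
  finally show ?thesis .
qed

lemma lincomb_Un_add:
  assumes "finite G1" "finite G2"
  shows "(\<Sum>s\<in>G1 \<union> G2. smul ((if s \<in> G1 then c1 s else 0) + (if s \<in> G2 then c2 s else 0)) (f s))
       = (\<Sum>s\<in>G1. smul (c1 s) (f s)) + (\<Sum>s\<in>G2. smul (c2 s) (f s))"
  unfolding smul_add_left sum.distrib
  using lincomb_extend[of "G1 \<union> G2" G1 c1 f] lincomb_extend[of "G1 \<union> G2" G2 c2 f] assms by simp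

lemma lincomb_Un_diff:
  assumes "finite G1" "finite G2"
  shows "(\<Sum>s\<in>G1 \<union> G2. smul ((if s \<in> G1 then c1 s else 0) - (if s \<in> G2 then c2 s else 0)) (f s))
       = (\<Sum>s\<in>G1. smul (c1 s) (f s)) - (\<Sum>s\<in>G2. smul (c2 s) (f s))"
  unfolding smul_diff_left sum_subtractf
  using lincomb_extend[of "G1 \<union> G2" G1 c1 f] lincomb_extend[of "G1 \<union> G2" G2 c2 f] assms by simp

lemma lincomb_reindex:
  assumes "inj_on f G"
  shows "(\<Sum>s\<in>f ` G. smul (c s) s) = (\<Sum>a\<in>G. smul (c (f a)) (f a))"
  using sum.reindex[OF assms, of "\<lambda>s. smul (c s) s"] by simp

subsection \<open>Subspaces and spans\<close>

lemma subspace_zero: "subspace smul X \<Longrightarrow> 0 \<in> X"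
  unfolding subspace_def by blast

lemma subspace_add: "subspace smul X \<Longrightarrow> x \<in> X \<Longrightarrow> y \<in> X \<Longrightarrow> x + y \<in> X"
  unfolding subspace_def by blast

lemma subspace_smul: "subspace smul X \<Longrightarrow> x \<in> X \<Longrightarrow> smul a x \<in> X"
  unfolding subspace_def by blast

lemma subspace_minus: "subspace smul X \<Longrightarrow> x \<in> X \<Longrightarrow> - x \<in> X"
  using subspace_smul[of X x "- 1"] by (simp only: smul_minus_one)

lemma subspace_diff: "subspace smul X \<Longrightarrow> x \<in> X \<Longrightarrow> y \<in> X \<Longrightarrow> x - y \<in> X"
  unfolding diff_conv_add_uminus by (intro subspace_add subspace_minus)

lemma subspace_lincomb:
  assumes "subspace smul X" "\<And>i. i \<in> I \<Longrightarrow> f i \<in> X"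
  shows "(\<Sum>i\<in>I. smul (c i) (f i)) \<in> X"
  using assms(2)
  by (induction I rule: infinite_finite_induct)
     (simp_all add: subspace_zero subspace_add subspace_smul assms(1))

lemma subspace_singleton_zero: "subspace smul {0}"
  unfolding subspace_def by auto

lemma subspace_UNIV: "subspace smul UNIV"
  unfolding subspace_def by auto

lemma subspace_Int: "subspace smul X \<Longrightarrow> subspace smul Y \<Longrightarrow> subspace smul (X \<inter> Y)"
  unfolding subspace_def by auto

abbreviation span :: "'v set \<Rightarrow> 'v set" where
  "span \<equiv> lspan smul"

lemma subspace_span [simp]: "subspace smul (span S)"
  unfolding lspan_def subspace_def by auto

lemma span_superset: "S \<subseteq> span S"
  unfolding lspan_def by auto

lemma span_base: "x \<in> S \<Longrightarrow> x \<in> span S"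
  using span_superset by blast

lemma span_minimal: "subspace smul W \<Longrightarrow> S \<subseteq> W \<Longrightarrow> span S \<subseteq> W"
  unfolding lspan_def by auto

lemma span_mono: "S \<subseteq> T \<Longrightarrow> span S \<subseteq> span T"
  by (meson span_minimal subspace_span span_superset subset_trans)

lemma span_eq_subspace: "subspace smul X \<Longrightarrow> span X = X"
  by (simp add: span_minimal span_superset subset_antisym)

lemma span_zero [simp]: "0 \<in> span S"
  by (simp add: subspace_zero)

lemma span_add: "x \<in> span S \<Longrightarrow> y \<in> span S \<Longrightarrow> x + y \<in> span S"
  by (simp add: subspace_add)

lemma span_lincomb: "(\<And>i. i \<in> I \<Longrightarrow> f i \<in> span S) \<Longrightarrow> (\<Sum>i\<in>I. smul (c i) (f i)) \<in> span S"
  by (rule subspace_lincomb) auto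

lemma span_Un_span_left: "span (span S \<union> T) = span (S \<union> T)"
proof
  show "span (span S \<union> T) \<subseteq> span (S \<union> T)"
    by (intro span_minimal subspace_span Un_least span_mono) (auto intro: span_base)
  show "span (S \<union> T) \<subseteq> span (span S \<union> T)"
    by (rule span_mono) (use span_superset in blast)
qed

lemma span_Un_span_right: "span (T \<union> span S) = span (T \<union> S)"
  using span_Un_span_left[of S T] by (simp add: Un_commute)

lemma span_Un_zero: "span ({0} \<union> S) = span S"
proof
  show "span ({0} \<union> S) \<subseteq> span S" by (rule span_minimal) (auto intro: span_base)
  show "span S \<subseteq> span ({0} \<union> S)" by (rule span_mono) auto
qed

lemma span_insert_zero [simp]: "span (insert 0 S) = span S"
  using span_Un_zero by simp

lemma span_Un_subspace_self: "subspace smul X \<Longrightarrow> Y \<subseteq> X \<Longrightarrow> span (X \<union> Y) = X"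
  by (simp add: Un_absorb2 span_eq_subspace)

lemma subspace_lincombs:
  assumes X: "subspace smul X"
  shows "subspace smul {x + (\<Sum>s\<in>G. smul (c s) s) | x G c. x \<in> X \<and> finite G \<and> G \<subseteq> S}"
    (is "subspace smul ?L")
  unfolding subspace_def
proof (intro conjI ballI allI)
  have "0 = 0 + (\<Sum>s\<in>{}. smul (c s) s)" for c :: "'v \<Rightarrow> 'k" by simp
  then show "0 \<in> ?L" using subspace_zero[OF X] by blast
next
  fix u v assume "u \<in> ?L" "v \<in> ?L"
  then obtain x1 G1 c1 x2 G2 c2
    where u: "u = x1 + (\<Sum>s\<in>G1. smul (c1 s) s)" "x1 \<in> X" "finite G1" "G1 \<subseteq> S"
      and v: "v = x2 + (\<Sum>s\<in>G2. smul (c2 s) s)" "x2 \<in> X" "finite G2" "G2 \<subseteq> S"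
    by blast
  define c where "c s = (if s \<in> G1 then c1 s else 0) + (if s \<in> G2 then c2 s else 0)" for s
  have "u + v = (x1 + x2) + (\<Sum>s\<in>G1 \<union> G2. smul (c s) s)"
    using u v lincomb_Un_add[of G1 G2 c1 c2 "\<lambda>s. s"] by (simp add: c_def algebra_simps)
  moreover have "x1 + x2 \<in> X" using u v X by (simp add: subspace_add)
  ultimately show "u + v \<in> ?L" using u v by blast
next
  fix a u assume "u \<in> ?L"
  then obtain x G c where u: "u = x + (\<Sum>s\<in>G. smul (c s) s)" "x \<in> X" "finite G" "G \<subseteq> S"
    by blast
  have "smul a u = smul a x + (\<Sum>s\<in>G. smul (a * c s) s)"
    unfolding u smul_add_right smul_sum_right smul_assoc ..
  moreover have "smul a x \<in> X" using X u by (simp add: subspace_smul)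
  ultimately show "smul a u \<in> ?L"
    using u by (intro CollectI exI[of _ "smul a x"] exI[of _ G] exI[of _ "\<lambda>s. a * c s"]) simp
qed

lemma in_span_Un_iff:
  assumes X: "subspace smul X"
  shows "v \<in> span (X \<union> S) \<longleftrightarrow>
    (\<exists>x G c. x \<in> X \<and> finite G \<and> G \<subseteq> S \<and> v = x + (\<Sum>s\<in>G. smul (c s) s))"
proof
  let ?L = "{x + (\<Sum>s\<in>G. smul (c s) s) | x G c. x \<in> X \<and> finite G \<and> G \<subseteq> S}"
  have "X \<subseteq> ?L"
  proof
    fix x assume "x \<in> X"
    moreover have "x = x + (\<Sum>s\<in>{}. smul (c s) s)" for c :: "'v \<Rightarrow> 'k" by simp
    ultimately show "x \<in> ?L" by blast
  qed
  moreover have "S \<subseteq> ?L"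
  proof
    fix s assume "s \<in> S"
    then show "s \<in> ?L" using subspace_zero[OF X]
      by (intro CollectI exI[of _ 0] exI[of _ "{s}"] exI[of _ "\<lambda>_. 1"]) simp
  qed
  ultimately have "span (X \<union> S) \<subseteq> ?L" by (intro span_minimal subspace_lincombs[OF X]) blast
  then show "v \<in> span (X \<union> S) \<Longrightarrow> \<exists>x G c. x \<in> X \<and> finite G \<and> G \<subseteq> S \<and> v = x + (\<Sum>s\<in>G. smul (c s) s)"
    by blast
next
  assume "\<exists>x G c. x \<in> X \<and> finite G \<and> G \<subseteq> S \<and> v = x + (\<Sum>s\<in>G. smul (c s) s)"
  then obtain x G c where "x \<in> X" "G \<subseteq> S" "v = x + (\<Sum>s\<in>G. smul (c s) s)" by blast
  then show "v \<in> span (X \<union> S)"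
    by (auto intro!: span_add span_lincomb intro: span_base)
qed

lemma in_span_iff: "v \<in> span S \<longleftrightarrow> (\<exists>G c. finite G \<and> G \<subseteq> S \<and> v = (\<Sum>s\<in>G. smul (c s) s))"
  using in_span_Un_iff[OF subspace_singleton_zero, of v S] by simp

lemma in_span_finite_subset:
  assumes X: "subspace smul X" and v: "v \<in> span (X \<union> B)"
  shows "\<exists>F. finite F \<and> F \<subseteq> B \<and> v \<in> span (X \<union> F)"
proof -
  obtain x G c where "x \<in> X" "finite G" "G \<subseteq> B" "v = x + (\<Sum>s\<in>G. smul (c s) s)"
    using v unfolding in_span_Un_iff[OF X] by blast
  moreover from this have "v \<in> span (X \<union> G)" unfolding in_span_Un_iff[OF X] by blast
  ultimately show ?thesis by blast
qed

lemma in_span_insert_iff: "v \<in> span (insert g S) \<longleftrightarrow> (\<exists>a s. s \<in> span S \<and> v = smul a g + s)"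
proof
  assume "v \<in> span (insert g S)"
  moreover have "span (insert g S) = span (span S \<union> {g})"
    using span_Un_span_left[of S "{g}"] by simp
  ultimately obtain x G c
    where xG: "x \<in> span S" "finite G" "G \<subseteq> {g}" "v = x + (\<Sum>s\<in>G. smul (c s) s)"
    using in_span_Un_iff[OF subspace_span, of v S "{g}"] by auto
  from xG(3) have "G = {} \<or> G = {g}" by blast
  then show "\<exists>a s. s \<in> span S \<and> v = smul a g + s"
  proof
    assume "G = {}"
    then have "v = smul 0 g + x" using xG by simp
    then show ?thesis using xG(1) by blast
  next
    assume "G = {g}"
    then have "v = smul (c g) g + x" using xG by (simp add: add.commute)
    then show ?thesis using xG(1) by blast
  qed
next
  assume "\<exists>a s. s \<in> span S \<and> v = smul a g + s"
  then obtain a s where "s \<in> span S" "v = smul a g + s" by blast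
  moreover have "span S \<subseteq> span (insert g S)" by (rule span_mono) blast
  moreover have "smul a g \<in> span (insert g S)"
    by (intro subspace_smul[OF subspace_span] span_base) simp
  ultimately show "v \<in> span (insert g S)" by (auto intro: span_add)
qed

lemma span_exchange:
  assumes "f \<in> span (insert g S)" "f \<notin> span S"
  shows "g \<in> span (insert f S)"
proof -
  obtain a s where as: "s \<in> span S" "f = smul a g + s"
    using assms(1) in_span_insert_iff by blast
  have a: "a \<noteq> 0" using as assms(2) by auto
  have "g = smul (inverse a) (f - s)"
    using smul_inverse_cancel[OF a, of g] as(2) by simp
  also have "\<dots> = smul (inverse a) f + smul (- inverse a) s"
    by (simp only: diff_conv_add_uminus smul_add_right smul_minus_right smul_minus_left)
  finally show ?thesis
    unfolding in_span_insert_iff using subspace_smul[OF subspace_span as(1)] by blast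
qed

subsection \<open>Linear independence modulo a subspace\<close>

definition indep_mod :: "'v set \<Rightarrow> 'v set \<Rightarrow> bool" where
  "indep_mod X S \<longleftrightarrow>
     (\<forall>G c. finite G \<longrightarrow> G \<subseteq> S \<longrightarrow> (\<Sum>s\<in>G. smul (c s) s) \<in> X \<longrightarrow> (\<forall>s\<in>G. c s = 0))"

lemma indep_modD:
  "indep_mod X S \<Longrightarrow> finite G \<Longrightarrow> G \<subseteq> S \<Longrightarrow> (\<Sum>s\<in>G. smul (c s) s) \<in> X \<Longrightarrow> s \<in> G \<Longrightarrow> c s = 0"
  unfolding indep_mod_def by blast

lemma indep_mod_subset: "indep_mod X S \<Longrightarrow> T \<subseteq> S \<Longrightarrow> indep_mod X T"
  unfolding indep_mod_def by blast

lemma indep_mod_empty: "indep_mod X {}"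
  unfolding indep_mod_def by blast

lemma indep_mod_notin: "indep_mod X S \<Longrightarrow> s \<in> S \<Longrightarrow> s \<notin> X"
  using indep_modD[of X S "{s}" "\<lambda>_. 1" s] by auto

lemma indep_mod_notin_span:
  assumes X: "subspace smul X" and I: "indep_mod X S" and s: "s \<in> S"
  shows "s \<notin> span (X \<union> (S - {s}))"
proof
  assume "s \<in> span (X \<union> (S - {s}))"
  then obtain x G c where xG: "x \<in> X" "finite G" "G \<subseteq> S - {s}" "s = x + (\<Sum>t\<in>G. smul (c t) t)"
    unfolding in_span_Un_iff[OF X] by blast
  define c' where "c' = c(s := -1)"
  have sG: "s \<notin> G" using xG by blast
  have "(\<Sum>t\<in>insert s G. smul (c' t) t) = - s + (\<Sum>t\<in>G. smul (c' t) t)"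
    using sG xG(2) by (simp add: c'_def smul_minus_one)
  also have "(\<Sum>t\<in>G. smul (c' t) t) = (\<Sum>t\<in>G. smul (c t) t)"
    by (rule sum.cong) (use sG in \<open>auto simp: c'_def\<close>)
  also have "- s + (\<Sum>t\<in>G. smul (c t) t) = - x" using xG(4) by (simp add: algebra_simps)
  finally have "(\<Sum>t\<in>insert s G. smul (c' t) t) \<in> X" using subspace_minus[OF X xG(1)] by simp
  from indep_modD[OF I _ _ this, of s] xG s have "c' s = 0" by auto
  then show False by (simp add: c'_def)
qed

lemma indep_mod_insert:
  assumes X: "subspace smul X" and I: "indep_mod X M" and t: "t \<notin> span (X \<union> M)"
  shows "indep_mod X (insert t M)"
  unfolding indep_mod_def
proof (intro allI impI ballI)
  fix G c s assume G: "finite G" "G \<subseteq> insert t M" "(\<Sum>s\<in>G. smul (c s) s) \<in> X" "s \<in> G"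
  show "c s = 0"
  proof (cases "t \<in> G")
    case False
    then show ?thesis using indep_modD[OF I G(1) _ G(3) G(4)] G(2) by blast
  next
    case True
    have GM: "G - {t} \<subseteq> M" using G(2) by blast
    have split: "(\<Sum>s\<in>G. smul (c s) s) = smul (c t) t + (\<Sum>s\<in>G - {t}. smul (c s) s)"
      using True G(1) by (simp add: sum.remove)
    have rest: "(\<Sum>s\<in>G - {t}. smul (c s) s) \<in> span (X \<union> M)"
      by (rule span_lincomb) (use GM span_base in blast)
    have ct: "c t = 0"
    proof (rule ccontr)
      assume ct: "c t \<noteq> 0"
      have "smul (c t) t = (\<Sum>s\<in>G. smul (c s) s) - (\<Sum>s\<in>G - {t}. smul (c s) s)"
        using split by simp
      also have "\<dots> \<in> span (X \<union> M)"
        using G(3) rest span_base[of _ "X \<union> M"] by (intro subspace_diff[OF subspace_span]) auto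
      finally show False
        using subspace_smul[OF subspace_span, of _ _ "inverse (c t)"] smul_inverse_cancel[OF ct] t
        by metis
    qed
    show ?thesis
    proof (cases "s = t")
      case False
      have "(\<Sum>s\<in>G - {t}. smul (c s) s) \<in> X" using G(3) split ct by simp
      from indep_modD[OF I _ GM this, of s] G False show ?thesis by blast
    qed (use ct in simp)
  qed
qed

lemma indep_mod_singleton: "subspace smul X \<Longrightarrow> y \<notin> X \<Longrightarrow> indep_mod X {y}"
  using indep_mod_insert[of X "{}" y] indep_mod_empty span_eq_subspace by simp

lemma indep_mod_Un:
  assumes X: "subspace smul X" and IA: "indep_mod X A" and IB: "indep_mod (span (X \<union> A)) B"
  shows "indep_mod X (A \<union> B)"
  unfolding indep_mod_def
proof (intro allI impI ballI)
  fix G c s assume G: "finite G" "G \<subseteq> A \<union> B" "(\<Sum>s\<in>G. smul (c s) s) \<in> X" "s \<in> G"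
  have split: "(\<Sum>s\<in>G. smul (c s) s) = (\<Sum>s\<in>G \<inter> B. smul (c s) s) + (\<Sum>s\<in>G - B. smul (c s) s)"
    using G(1) by (rule sum.Int_Diff)
  have GA: "G - B \<subseteq> A" using G(2) by blast
  have inA: "(\<Sum>s\<in>G - B. smul (c s) s) \<in> span (X \<union> A)"
    by (rule span_lincomb) (use GA span_base in blast)
  have "(\<Sum>s\<in>G \<inter> B. smul (c s) s) = (\<Sum>s\<in>G. smul (c s) s) - (\<Sum>s\<in>G - B. smul (c s) s)"
    using split by simp
  also have "\<dots> \<in> span (X \<union> A)"
    using G(3) inA span_base[of _ "X \<union> A"] by (intro subspace_diff[OF subspace_span]) auto
  finally have zB: "\<forall>s\<in>G \<inter> B. c s = 0"
    using indep_modD[OF IB] G(1) by blast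
  show "c s = 0"
  proof (cases "s \<in> B")
    case False
    have "(\<Sum>s\<in>G - B. smul (c s) s) \<in> X" using split G(3) zB by simp
    from indep_modD[OF IA _ GA this, of s] G False show ?thesis by blast
  qed (use zB G(4) in blast)
qed

lemma indep_mod_span_Un:
  assumes X: "subspace smul X" and I: "indep_mod X (A \<union> B)" and d: "A \<inter> B = {}"
  shows "indep_mod (span (X \<union> A)) B"
  unfolding indep_mod_def
proof (intro allI impI ballI)
  fix G c s assume G: "finite G" "G \<subseteq> B" "(\<Sum>s\<in>G. smul (c s) s) \<in> span (X \<union> A)" "s \<in> G"
  obtain x H d where H: "x \<in> X" "finite H" "H \<subseteq> A" "(\<Sum>s\<in>G. smul (c s) s) = x + (\<Sum>t\<in>H. smul (d t) t)"
    using G(3) unfolding in_span_Un_iff[OF X] by blast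
  define e where "e t = (if t \<in> G then c t else - d t)" for t
  have GH: "G \<inter> H = {}" using G(2) H(3) d by blast
  have "(\<Sum>t\<in>G \<union> H. smul (e t) t) = (\<Sum>t\<in>G. smul (e t) t) + (\<Sum>t\<in>H. smul (e t) t)"
    using G(1) H(2) GH by (rule sum.union_disjoint)
  also have "(\<Sum>t\<in>G. smul (e t) t) = (\<Sum>t\<in>G. smul (c t) t)"
    by (rule sum.cong) (auto simp: e_def)
  also have "(\<Sum>t\<in>H. smul (e t) t) = - (\<Sum>t\<in>H. smul (d t) t)"
    unfolding sum_negf[symmetric] by (rule sum.cong) (use GH in \<open>auto simp: e_def smul_minus_left\<close>)
  finally have "(\<Sum>t\<in>G \<union> H. smul (e t) t) \<in> X" using H(1,4) by simp
  from indep_modD[OF I _ _ this, of s] G H have "e s = 0" by blast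
  then show "c s = 0" using G(4) by (simp add: e_def)
qed

lemma indep_mod_card_le:
  assumes "finite G"
  shows "subspace smul X \<Longrightarrow> indep_mod X F \<Longrightarrow> F \<subseteq> span (X \<union> G) \<Longrightarrow> finite F \<and> card F \<le> card G"
  using assms
proof (induction G arbitrary: X F rule: finite_induct)
  case empty
  then have "F = {}" using indep_mod_notin[OF empty(2)] span_eq_subspace by auto
  then show ?case by simp
next
  case (insert g G)
  show ?case
  proof (cases "F \<subseteq> span (X \<union> G)")
    case True
    from insert.IH[OF insert.prems(1,2) True] insert.hyps show ?thesis by simp
  next
    case False
    then obtain f where f: "f \<in> F" "f \<notin> span (X \<union> G)" by blast
    define X' where "X' = span (X \<union> {f})"
    have I': "indep_mod X' (F - {f})" unfolding X'_def
      by (rule indep_mod_span_Un[OF insert.prems(1)]) (use insert.prems(2) f(1) in \<open>auto simp: insert_absorb\<close>)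
    have XX': "X \<subseteq> X'" and fX': "f \<in> X'" unfolding X'_def using span_superset by blast+
    have "f \<in> span (insert g (X \<union> G))" using insert.prems(3) f(1) by auto
    from span_exchange[OF this f(2)] have "g \<in> span (insert f (X \<union> G))" .
    also have "span (insert f (X \<union> G)) \<subseteq> span (X' \<union> G)"
      by (rule span_mono) (use XX' fX' in blast)
    finally have "X \<union> insert g G \<subseteq> span (X' \<union> G)" using XX' span_superset by blast
    then have "F - {f} \<subseteq> span (X' \<union> G)"
      using insert.prems(3) span_minimal[OF subspace_span] by blast
    from insert.IH[OF subspace_span I'[unfolded X'_def]] this[unfolded X'_def]
    have "finite (F - {f})" "card (F - {f}) \<le> card G" by auto
    then show ?thesis using f(1) insert.hyps by (simp add: card_Diff_singleton_if)
  qed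
qed

lemma indep_mod_extend:
  assumes X: "subspace smul X"
  shows "\<exists>M. M \<subseteq> T \<and> indep_mod X M \<and> T \<subseteq> span (X \<union> M)"
proof -
  let ?A = "{M. M \<subseteq> T \<and> indep_mod X M}"
  have "\<Union>C \<in> ?A" if C: "C \<in> chains ?A" for C
  proof -
    have "indep_mod X (\<Union>C)"
      unfolding indep_mod_def
    proof (intro allI impI)
      fix G c assume G: "finite G" "G \<subseteq> \<Union>C" "(\<Sum>s\<in>G. smul (c s) s) \<in> X"
      show "\<forall>s\<in>G. c s = 0"
      proof (cases "C = {}")
        case False
        have "subset.chain UNIV C" using C unfolding chains_def chain_subset_alt_def by blast
        then obtain B where "B \<in> C" "G \<subseteq> B" using finite_subset_Union_chain[OF G(1,2) False] by blast
        then show ?thesis using indep_modD[OF _ G(1) _ G(3)] C unfolding chains_def by blast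
      qed (use G in auto)
    qed
    then show ?thesis using C unfolding chains_def by blast
  qed
  then obtain M where M: "M \<in> ?A" and max: "\<forall>N\<in>?A. M \<subseteq> N \<longrightarrow> N = M"
    using Zorn_Lemma[of ?A] by blast
  have "t \<in> span (X \<union> M)" if t: "t \<in> T" for t
  proof (rule ccontr)
    assume n: "t \<notin> span (X \<union> M)"
    then have "insert t M = M" using indep_mod_insert[OF X _ n] M t max by blast
    then show False using n span_superset by blast
  qed
  then show ?thesis using M by blast
qed

lemma indep_mod_image_iff:
  assumes inj: "inj_on \<phi> A"
  shows "indep_mod X (\<phi> ` A) \<longleftrightarrow>
    (\<forall>G c. finite G \<longrightarrow> G \<subseteq> A \<longrightarrow> (\<Sum>a\<in>G. smul (c a) (\<phi> a)) \<in> X \<longrightarrow> (\<forall>a\<in>G. c a = 0))"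
proof
  assume I: "indep_mod X (\<phi> ` A)"
  show "\<forall>G c. finite G \<longrightarrow> G \<subseteq> A \<longrightarrow> (\<Sum>a\<in>G. smul (c a) (\<phi> a)) \<in> X \<longrightarrow> (\<forall>a\<in>G. c a = 0)"
  proof (intro allI impI ballI)
    fix G c a assume G: "finite G" "G \<subseteq> A" "(\<Sum>a\<in>G. smul (c a) (\<phi> a)) \<in> X" and a: "a \<in> G"
    define c' where "c' b = c (inv_into A \<phi> b)" for b
    have "(\<Sum>b\<in>\<phi> ` G. smul (c' b) b) = (\<Sum>a\<in>G. smul (c a) (\<phi> a))"
      unfolding lincomb_reindex[OF inj_on_subset[OF inj G(2)]] c'_def
      by (intro sum.cong refl) (simp add: inv_into_f_f[OF inj] subsetD[OF G(2)])
    then have "(\<Sum>b\<in>\<phi> ` G. smul (c' b) b) \<in> X" using G(3) by simp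
    moreover have "finite (\<phi> ` G)" "\<phi> ` G \<subseteq> \<phi> ` A" "\<phi> a \<in> \<phi> ` G" using G a by auto
    ultimately have "c' (\<phi> a) = 0" using indep_modD[OF I] by blast
    then show "c a = 0" using a by (simp add: c'_def inv_into_f_f[OF inj] subsetD[OF G(2)])
  qed
next
  assume C: "\<forall>G c. finite G \<longrightarrow> G \<subseteq> A \<longrightarrow> (\<Sum>a\<in>G. smul (c a) (\<phi> a)) \<in> X \<longrightarrow> (\<forall>a\<in>G. c a = 0)"
  show "indep_mod X (\<phi> ` A)"
    unfolding indep_mod_def
  proof (intro allI impI ballI)
    fix G c s assume G: "finite G" "G \<subseteq> \<phi> ` A" "(\<Sum>s\<in>G. smul (c s) s) \<in> X" and s: "s \<in> G"
    obtain G' where G': "G' \<subseteq> A" "G = \<phi> ` G'" using G(2) unfolding subset_image_iff by blast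
    have inj': "inj_on \<phi> G'" using inj_on_subset[OF inj G'(1)] .
    have "finite G'" using G(1) G'(2) finite_image_iff[OF inj'] by simp
    moreover have "(\<Sum>a\<in>G'. smul (c (\<phi> a)) (\<phi> a)) \<in> X" using G(3) lincomb_reindex[OF inj'] G'(2) by simp
    ultimately have "\<forall>a\<in>G'. c (\<phi> a) = 0" using C[rule_format, of G' "\<lambda>a. c (\<phi> a)"] G'(1) by simp
    then show "c s = 0" using s G'(2) by blast
  qed
qed

lemma in_span_Un_imageE:
  assumes X: "subspace smul X" and inj: "inj_on \<phi> A" and v: "v \<in> span (X \<union> \<phi> ` A)"
  obtains x G c where "x \<in> X" "finite G" "G \<subseteq> A" "v = x + (\<Sum>a\<in>G. smul (c a) (\<phi> a))"
proof -
  obtain x G c where G: "x \<in> X" "finite G" "G \<subseteq> \<phi> ` A" "v = x + (\<Sum>s\<in>G. smul (c s) s)"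
    using v unfolding in_span_Un_iff[OF X] by blast
  obtain G' where G': "G' \<subseteq> A" "G = \<phi> ` G'" using G(3) unfolding subset_image_iff by blast
  have inj': "inj_on \<phi> G'" using inj_on_subset[OF inj G'(1)] .
  have "finite G'" using G(2) G'(2) finite_image_iff[OF inj'] by simp
  moreover have "v = x + (\<Sum>a\<in>G'. smul (c (\<phi> a)) (\<phi> a))" using G(4) G'(2) lincomb_reindex[OF inj'] by simp
  ultimately show ?thesis by (rule that[OF G(1) _ G'(1)])
qed

subsection \<open>Bases and dimensions of quotients\<close>

text \<open>The classes of the vectors in B form a basis of W/X.\<close>

definition basis_mod :: "'v set \<Rightarrow> 'v set \<Rightarrow> 'v set \<Rightarrow> bool" where
  "basis_mod X W B \<longleftrightarrow> indep_mod X B \<and> span (X \<union> B) = W"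

lemma basis_mod_subset_exists:
  assumes X: "subspace smul X"
  shows "\<exists>B. B \<subseteq> T \<and> basis_mod X (span (X \<union> T)) B"
proof -
  obtain M where M: "M \<subseteq> T" "indep_mod X M" "T \<subseteq> span (X \<union> M)"
    using indep_mod_extend[OF X] by blast
  have "span (X \<union> M) \<subseteq> span (X \<union> T)" using M(1) by (intro span_mono) blast
  moreover have "X \<union> T \<subseteq> span (X \<union> M)" using M(3) span_superset by blast
  then have "span (X \<union> T) \<subseteq> span (X \<union> M)" by (rule span_minimal[OF subspace_span])
  ultimately show ?thesis using M unfolding basis_mod_def by blast
qed

lemma basis_mod_exists:
  "subspace smul X \<Longrightarrow> subspace smul W \<Longrightarrow> X \<subseteq> W \<Longrightarrow> \<exists>B. B \<subseteq> W \<and> basis_mod X W B"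
  using basis_mod_subset_exists[of X W] by (simp add: Un_absorb1 span_eq_subspace)

lemma basis_exists: "subspace smul W \<Longrightarrow> \<exists>A. A \<subseteq> W \<and> basis_mod {0} W A"
  using basis_mod_exists[OF subspace_singleton_zero] subspace_zero by blast

lemma basis_mod_zero_iff: "basis_mod {0} W A \<longleftrightarrow> indep_mod {0} A \<and> span A = W"
  by (simp add: basis_mod_def)

lemma basis_mod_card_eq:
  assumes X: "subspace smul X" and F: "finite F" "basis_mod X W F" and G: "basis_mod X W G"
  shows "finite G \<and> card G = card F"
proof -
  have "span (X \<union> F) = span (X \<union> G)" using F G unfolding basis_mod_def by simp
  then have GF: "G \<subseteq> span (X \<union> F)" and FG: "F \<subseteq> span (X \<union> G)"
    using span_superset[of "X \<union> F"] span_superset[of "X \<union> G"] by auto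
  have "finite G" "card G \<le> card F"
    using indep_mod_card_le[OF F(1) X _ GF] G unfolding basis_mod_def by auto
  moreover have "card F \<le> card G"
    using indep_mod_card_le[OF \<open>finite G\<close> X _ FG] F unfolding basis_mod_def by auto
  ultimately show ?thesis by simp
qed

lemma basis_mod_Un:
  assumes X: "subspace smul X" and F: "basis_mod X U F" and G: "basis_mod U W G"
  shows "basis_mod X W (F \<union> G) \<and> F \<inter> G = {}"
proof -
  have U: "span (X \<union> F) = U" and IF: "indep_mod X F" using F unfolding basis_mod_def by auto
  have W: "span (U \<union> G) = W" and IG: "indep_mod U G" using G unfolding basis_mod_def by auto
  have "span (X \<union> (F \<union> G)) = span (span (X \<union> F) \<union> G)"
    by (simp add: span_Un_span_left Un_assoc)
  then have "basis_mod X W (F \<union> G)"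
    using indep_mod_Un[OF X IF] IG unfolding basis_mod_def U W by simp
  moreover have "F \<subseteq> U" using U span_superset[of "X \<union> F"] by auto
  then have "F \<inter> G = {}" using indep_mod_notin[OF IG] by blast
  ultimately show ?thesis ..
qed

definition fin_codim :: "'v set \<Rightarrow> 'v set \<Rightarrow> bool" where
  "fin_codim X W \<longleftrightarrow> (\<exists>F. finite F \<and> basis_mod X W F)"

text \<open>Only meaningful under fin_codim X W; otherwise SOME picks an arbitrary, possibly infinite,
  set and card returns a junk value.\<close>

definition codim :: "'v set \<Rightarrow> 'v set \<Rightarrow> nat" where
  "codim X W = card (SOME F. basis_mod X W F)"

lemma codim_eq_card:
  assumes "subspace smul X" "finite F" "basis_mod X W F"
  shows "codim X W = card F"
  using basis_mod_card_eq[OF assms someI[of "basis_mod X W", OF assms(3)]]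
  unfolding codim_def by simp

lemma fin_codim_subset: "fin_codim X W \<Longrightarrow> X \<subseteq> W"
  unfolding fin_codim_def basis_mod_def using span_superset by blast

lemma fin_codim_span:
  assumes X: "subspace smul X" and T: "finite T"
  shows "fin_codim X (span (X \<union> T)) \<and> codim X (span (X \<union> T)) \<le> card T"
proof -
  obtain F where "F \<subseteq> T" "basis_mod X (span (X \<union> T)) F"
    using basis_mod_subset_exists[OF X] by blast
  moreover from this have "finite F" using T finite_subset by blast
  ultimately show ?thesis
    using codim_eq_card[OF X] card_mono[OF T] unfolding fin_codim_def by auto
qed

lemma codim_refl: "subspace smul X \<Longrightarrow> fin_codim X X \<and> codim X X = 0"
  using fin_codim_span[of X "{}"] by (simp add: span_eq_subspace)

lemma codim_eq_0_iff:
  assumes X: "subspace smul X" and f: "fin_codim X W"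
  shows "codim X W = 0 \<longleftrightarrow> W = X"
proof
  obtain F where F: "finite F" "basis_mod X W F" using f unfolding fin_codim_def by blast
  assume "codim X W = 0"
  then have "F = {}" using codim_eq_card[OF X F] F(1) by simp
  then show "W = X" using F span_eq_subspace[OF X] unfolding basis_mod_def by simp
qed (use codim_refl[OF X] in simp)

lemma codim_trans:
  assumes X: "subspace smul X" and f1: "fin_codim X U" and f2: "fin_codim U W"
  shows "fin_codim X W \<and> codim X W = codim X U + codim U W"
proof -
  have U: "subspace smul U"
    using f1 unfolding fin_codim_def basis_mod_def by auto
  obtain F G where F: "finite F" "basis_mod X U F" and G: "finite G" "basis_mod U W G"
    using f1 f2 unfolding fin_codim_def by blast
  have FG: "basis_mod X W (F \<union> G)" "F \<inter> G = {}" using basis_mod_Un[OF X F(2) G(2)] by auto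
  have "finite (F \<union> G)" using F G by simp
  then show ?thesis
    using FG codim_eq_card[OF X _ FG(1)] codim_eq_card[OF X F] codim_eq_card[OF U G] F G
    unfolding fin_codim_def by (auto simp: card_Un_disjoint)
qed

lemma codim_split:
  assumes X: "subspace smul X" and U: "subspace smul U" and XU: "X \<subseteq> U" and UW: "U \<subseteq> W"
    and f: "fin_codim X W"
  shows "fin_codim X U \<and> fin_codim U W \<and> codim X W = codim X U + codim U W"
proof -
  obtain H where H: "finite H" "basis_mod X W H" using f unfolding fin_codim_def by blast
  have W: "W = span (X \<union> H)" using H unfolding basis_mod_def by simp
  obtain F where F: "basis_mod X U F" "F \<subseteq> U" using basis_mod_exists[OF X U XU] by blast
  have "F \<subseteq> span (X \<union> H)" using F(2) UW W by blast
  then have "finite F" using indep_mod_card_le[OF H(1) X] F unfolding basis_mod_def by blast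
  moreover have "span (U \<union> H) = W"
  proof
    show "span (U \<union> H) \<subseteq> W"
      using UW W span_superset[of "X \<union> H"] by (intro span_minimal) (auto simp: W)
    show "W \<subseteq> span (U \<union> H)" unfolding W using XU by (intro span_mono) blast
  qed
  then obtain G where "G \<subseteq> H" "basis_mod U W G" using basis_mod_subset_exists[OF U, of H] by auto
  moreover from this have "finite G" using H(1) finite_subset by blast
  ultimately show ?thesis
    using F(1) codim_trans[OF X] unfolding fin_codim_def by blast
qed

lemma ssum_eq_span:
  assumes X: "subspace smul X" and Y: "subspace smul Y"
  shows "ssum X Y = span (X \<union> Y)"
proof
  show "ssum X Y \<subseteq> span (X \<union> Y)"
  proof
    fix v assume "v \<in> ssum X Y"
    then obtain x y where "v = x + y" "x \<in> X" "y \<in> Y" unfolding ssum_def by blast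
    then show "v \<in> span (X \<union> Y)" by (simp add: span_add span_base)
  qed
  show "span (X \<union> Y) \<subseteq> ssum X Y"
  proof
    fix v assume "v \<in> span (X \<union> Y)"
    then obtain x G c where v: "x \<in> X" "G \<subseteq> Y" "v = x + (\<Sum>s\<in>G. smul (c s) s)"
      unfolding in_span_Un_iff[OF X] by blast
    have "(\<Sum>s\<in>G. smul (c s) s) \<in> Y" using v(2) by (intro subspace_lincomb[OF Y]) blast
    then show "v \<in> ssum X Y" using v(1,3) unfolding ssum_def by blast
  qed
qed

lemma qdim_imp_basis_mod:
  assumes X: "subspace smul X" and q: "qdim smul W X d"
  shows "\<exists>F. finite F \<and> basis_mod X W F \<and> card F = d"
proof -
  obtain v where v: "span (X \<union> v ` {..<d}) = W"
    and ind: "\<And>c. (\<Sum>i<d. smul (c i) (v i)) \<in> X \<Longrightarrow> \<forall>i<d. c i = 0"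
    using q unfolding qdim_def by blast
  have inj: "inj_on v {..<d}"
  proof (rule inj_onI, rule ccontr)
    fix i j assume ij: "i \<in> {..<d}" "j \<in> {..<d}" "v i = v j" "i \<noteq> j"
    define c where "c k = (if k = i then 1 else if k = j then -1 else (0::'k))" for k
    have "(\<Sum>k<d. smul (c k) (v k)) = (\<Sum>k\<in>{i,j}. smul (c k) (v k))"
      by (rule sum.mono_neutral_right) (use ij in \<open>auto simp: c_def\<close>)
    also have "\<dots> = 0" using ij by (simp add: c_def smul_minus_one)
    finally have "c i = 0" using ind[of c] subspace_zero[OF X] ij by simp
    then show False by (simp add: c_def)
  qed
  have "indep_mod X (v ` {..<d})"
    unfolding indep_mod_def
  proof (intro allI impI ballI)
    fix G c s assume G: "finite G" "G \<subseteq> v ` {..<d}" "(\<Sum>s\<in>G. smul (c s) s) \<in> X" "s \<in> G"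
    define K where "K = {k\<in>{..<d}. v k \<in> G}"
    define e where "e k = (if k \<in> K then c (v k) else 0)" for k
    have vK: "v ` K = G" using G(2) unfolding K_def by blast
    have "K \<subseteq> {..<d}" unfolding K_def by blast
    have "(\<Sum>k<d. smul (e k) (v k)) = (\<Sum>k\<in>K. smul (c (v k)) (v k))"
      unfolding e_def by (rule lincomb_extend) (auto simp: K_def)
    also have "\<dots> = (\<Sum>s\<in>G. smul (c s) s)"
      using lincomb_reindex[OF inj_on_subset[OF inj \<open>K \<subseteq> {..<d}\<close>], of c] vK by simp
    finally have "\<forall>k<d. e k = 0" using G(3) ind by simp
    moreover obtain k where "k \<in> K" "s = v k" using G(4) vK by blast
    ultimately show "c s = 0" unfolding e_def K_def by auto
  qed
  then show ?thesis using v card_image[OF inj] unfolding basis_mod_def by auto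
qed

lemma basis_mod_imp_qdim:
  assumes F: "finite F" "basis_mod X W F"
  shows "qdim smul W X (card F)"
proof -
  define n where "n = card F"
  obtain v where "bij_betw v {..<n} F"
    using ex_bij_betw_nat_finite[OF F(1)] by (auto simp: atLeast0LessThan n_def)
  then have im: "v ` {..<n} = F" and inj: "inj_on v {..<n}"
    unfolding bij_betw_def by auto
  have "\<forall>i<n. c i = 0" if S: "(\<Sum>i<n. smul (c i) (v i)) \<in> X" for c
  proof (intro allI impI)
    fix i assume i: "i < n"
    define c' where "c' s = c (inv_into {..<n} v s)" for s
    have "(\<Sum>s\<in>F. smul (c' s) s) = (\<Sum>k<n. smul (c' (v k)) (v k))"
      using lincomb_reindex[OF inj, of c'] im by simp
    also have "\<dots> = (\<Sum>k<n. smul (c k) (v k))"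
      by (rule sum.cong) (auto simp: c'_def inv_into_f_f[OF inj])
    finally have "c' (v i) = 0"
      using indep_modD[of X F F c' "v i"] F S i im unfolding basis_mod_def by auto
    then show "c i = 0" using i by (simp add: c'_def inv_into_f_f[OF inj])
  qed
  then show ?thesis using F im unfolding qdim_def basis_mod_def n_def[symmetric] by auto
qed

lemma qdim_iff_codim:
  assumes X: "subspace smul X"
  shows "qdim smul W X d \<longleftrightarrow> fin_codim X W \<and> codim X W = d"
  using qdim_imp_basis_mod[OF X] basis_mod_imp_qdim codim_eq_card[OF X]
  unfolding fin_codim_def by metis

lemma coset_self: "subspace smul X \<Longrightarrow> u \<in> coset u X"
  unfolding coset_def using subspace_zero by force

lemma coset_eq_iff:
  assumes X: "subspace smul X"
  shows "coset u X = coset w X \<longleftrightarrow> u - w \<in> X"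
proof
  assume "coset u X = coset w X"
  then obtain x where "u = w + x" "x \<in> X" using coset_self[OF X, of u] unfolding coset_def by blast
  then show "u - w \<in> X" by simp
next
  assume d: "u - w \<in> X"
  have "v \<in> coset w X" if v: "v \<in> coset u X" and uw: "u - w \<in> X" for u w v
  proof -
    obtain x where "v = u + x" "x \<in> X" using v unfolding coset_def by blast
    then have "v = w + ((u - w) + x)" "(u - w) + x \<in> X" using uw by (simp_all add: subspace_add[OF X])
    then show ?thesis unfolding coset_def by blast
  qed
  moreover have "w - u \<in> X" using subspace_minus[OF X d] by simp
  ultimately show "coset u X = coset w X" using d by blast
qed

lemma qadd_coset:
  assumes X: "subspace smul X"
  shows "qadd (coset u X) (coset w X) = coset (u + w) X"
proof
  show "qadd (coset u X) (coset w X) \<subseteq> coset (u + w) X"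
  proof
    fix v assume "v \<in> qadd (coset u X) (coset w X)"
    then obtain x y where "v = (u + x) + (w + y)" "x \<in> X" "y \<in> X" unfolding qadd_def coset_def by blast
    then have "v = (u + w) + (x + y)" "x + y \<in> X" by (simp_all add: algebra_simps subspace_add[OF X])
    then show "v \<in> coset (u + w) X" unfolding coset_def by blast
  qed
  show "coset (u + w) X \<subseteq> qadd (coset u X) (coset w X)"
  proof
    fix v assume "v \<in> coset (u + w) X"
    then obtain x where x: "v = (u + w) + x" "x \<in> X" unfolding coset_def by blast
    then have "v = (u + x) + w" by (simp add: algebra_simps)
    moreover have "u + x \<in> coset u X" using x(2) unfolding coset_def by blast
    ultimately show "v \<in> qadd (coset u X) (coset w X)" using coset_self[OF X] unfolding qadd_def by blast
  qed
qed

lemma qsmul_coset: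
  assumes X: "subspace smul X"
  shows "qsmul smul X c (coset u X) = coset (smul c u) X"
proof
  show "qsmul smul X c (coset u X) \<subseteq> coset (smul c u) X"
  proof
    fix v assume "v \<in> qsmul smul X c (coset u X)"
    then obtain x y where "v = smul c (u + x) + y" "x \<in> X" "y \<in> X" unfolding qsmul_def coset_def by blast
    then have "v = smul c u + (smul c x + y)" "smul c x + y \<in> X"
      by (simp_all add: smul_add_right algebra_simps subspace_add[OF X] subspace_smul[OF X])
    then show "v \<in> coset (smul c u) X" unfolding coset_def by blast
  qed
  show "coset (smul c u) X \<subseteq> qsmul smul X c (coset u X)"
    unfolding qsmul_def coset_def using coset_self[OF X, of u] unfolding coset_def by blast
qed

subsection \<open>Cardinalities of bases\<close>

lemma basis_mod_lepoll:
  assumes X: "subspace smul X" and B: "basis_mod X W B" and B': "basis_mod X W B'"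
    and inf: "infinite B'"
  shows "B \<lesssim> B'"
proof -
  have IB: "indep_mod X B" and span_eq: "span (X \<union> B) = span (X \<union> B')"
    using B B' unfolding basis_mod_def by auto
  have "\<forall>b'\<in>B'. \<exists>F. finite F \<and> F \<subseteq> B \<and> b' \<in> span (X \<union> F)"
  proof
    fix b' assume "b' \<in> B'"
    then have "b' \<in> span (X \<union> B)" using span_superset[of "X \<union> B'"] span_eq by blast
    then show "\<exists>F. finite F \<and> F \<subseteq> B \<and> b' \<in> span (X \<union> F)" by (rule in_span_finite_subset[OF X])
  qed
  then obtain F where F_all: "\<forall>b'\<in>B'. finite (F b') \<and> F b' \<subseteq> B \<and> b' \<in> span (X \<union> F b')"
    by (rule bchoice[THEN exE])
  then have F: "finite (F b') \<and> F b' \<subseteq> B \<and> b' \<in> span (X \<union> F b')" if "b' \<in> B'" for b'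
    using that by blast
  have cover: "B \<subseteq> (\<Union>b'\<in>B'. F b')"
  proof
    fix b assume b: "b \<in> B"
    show "b \<in> (\<Union>b'\<in>B'. F b')"
    proof (rule ccontr)
      assume n: "b \<notin> (\<Union>b'\<in>B'. F b')"
      have "B' \<subseteq> span (X \<union> (B - {b}))"
      proof
        fix b' assume b': "b' \<in> B'"
        have "span (X \<union> F b') \<subseteq> span (X \<union> (B - {b}))" using F[OF b'] n b' by (intro span_mono) blast
        then show "b' \<in> span (X \<union> (B - {b}))" using F[OF b'] by blast
      qed
      then have "X \<union> B' \<subseteq> span (X \<union> (B - {b}))" using span_superset[of "X \<union> (B - {b})"] by blast
      then have "span (X \<union> B) \<subseteq> span (X \<union> (B - {b}))"
        unfolding span_eq by (rule span_minimal[OF subspace_span])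
      then have "b \<in> span (X \<union> (B - {b}))" using span_superset[of "X \<union> B"] b by blast
      then show False using indep_mod_notin_span[OF X IB b] by blast
    qed
  qed
  have "ordLeq3 (card_of (\<Union>b'\<in>B'. F b')) (card_of B')"
  proof (rule card_of_UNION_ordLeq_infinite[OF inf])
    show "ordLeq3 (card_of B') (card_of B')" by (rule ordLeq_refl[OF card_of_Card_order])
    show "\<forall>b'\<in>B'. ordLeq3 (card_of (F b')) (card_of B')"
    proof
      fix b' assume "b' \<in> B'"
      then have "F b' \<lesssim> B'" using finite_lepoll_infinite[OF inf] F by blast
      then show "ordLeq3 (card_of (F b')) (card_of B')" unfolding lepoll_def card_of_ordLeq .
    qed
  qed
  then have "(\<Union>b'\<in>B'. F b') \<lesssim> B'" unfolding lepoll_def card_of_ordLeq .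
  with subset_imp_lepoll[OF cover] show ?thesis by (rule lepoll_trans)
qed

lemma basis_mod_eqpoll:
  assumes X: "subspace smul X" and B: "basis_mod X W B" and B': "basis_mod X W B'"
  shows "B \<approx> B'"
proof (cases "finite B")
  case True
  then show ?thesis using basis_mod_card_eq[OF X True B B'] by (simp add: eqpoll_iff_card)
next
  case False
  then have "infinite B'" using basis_mod_card_eq[OF X _ B' B] by blast
  then show ?thesis
    using basis_mod_lepoll[OF X B B'] basis_mod_lepoll[OF X B' B False] lepoll_antisym by blast
qed

end

lemma infinite_Un_finite_eqpoll:
  assumes "infinite A" "finite F"
  shows "A \<union> F \<approx> A"
  using assms(2)
proof (induction F rule: finite_induct)
  case (insert x F)
  have "A \<union> insert x F = insert x (A \<union> F)" by blast
  also have "\<dots> \<approx> A \<union> F" using assms(1) by (intro infinite_insert_eqpoll) simp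
  also have "\<dots> \<approx> A" by (rule insert.IH)
  finally show ?case .
qed simp

lemma eqpoll_Un_finite_iff:
  assumes "infinite A" "finite F"
  shows "A \<union> F \<approx> B \<longleftrightarrow> A \<approx> B"
  using infinite_Un_finite_eqpoll[OF assms] eqpoll_sym eqpoll_trans by metis

lemma infinite_split_eqpoll:
  assumes inf: "infinite M"
  shows "\<exists>M1 M2. M1 \<union> M2 = M \<and> M1 \<inter> M2 = {} \<and> M1 \<approx> M2"
proof -
  have "M \<times> M \<approx> M"
    using card_of_Times_same_infinite[OF inf] unfolding eqpoll_iff_card_of_ordIso .
  moreover have "M \<times> (UNIV::bool set) \<lesssim> M \<times> M"
    using finite_lepoll_infinite[OF inf, of "UNIV::bool set"] by (intro times_lepoll_mono) auto
  ultimately have "M \<times> (UNIV::bool set) \<lesssim> M" using lepoll_trans2 by blast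
  moreover have "M \<lesssim> M \<times> (UNIV::bool set)"
    unfolding lepoll_def by (rule exI[of _ "\<lambda>x. (x, True)"]) (auto simp: inj_on_def)
  ultimately obtain h where h: "bij_betw h (M \<times> (UNIV::bool set)) M"
    using lepoll_antisym unfolding eqpoll_def by blast
  then have inj: "inj_on h (M \<times> UNIV)" and im: "h ` (M \<times> UNIV) = M"
    unfolding bij_betw_def by auto
  define M1 where "M1 = (\<lambda>x. h (x, True)) ` M"
  define M2 where "M2 = (\<lambda>x. h (x, False)) ` M"
  have "M1 \<approx> M" "M2 \<approx> M"
    unfolding M1_def M2_def using inj by (auto intro!: inj_on_image_eqpoll_self simp: inj_on_def)
  then have "M1 \<approx> M2" using eqpoll_sym eqpoll_trans by blast
  moreover have "M1 \<union> M2 = M"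
  proof
    show "M \<subseteq> M1 \<union> M2"
    proof
      fix y assume "y \<in> M"
      then obtain x b where "x \<in> M" "y = h (x, b)" using im by force
      then show "y \<in> M1 \<union> M2" unfolding M1_def M2_def by (cases b) auto
    qed
  qed (use im in \<open>auto simp: M1_def M2_def\<close>)
  moreover have "M1 \<inter> M2 = {}" using inj_onD[OF inj] unfolding M1_def M2_def by fastforce
  ultimately show ?thesis by blast
qed

context left_vs
begin

subsection \<open>Subspaces isomorphic to their quotient\<close>

lemma lincomb_transfer_unique:
  assumes IA: "indep_mod {0} A"
    and G1: "finite G1" "G1 \<subseteq> A" and G2: "finite G2" "G2 \<subseteq> A"
    and eq: "(\<Sum>a\<in>G1. smul (c1 a) a) = (\<Sum>a\<in>G2. smul (c2 a) a)"
  shows "(\<Sum>a\<in>G1. smul (c1 a) (\<phi> a)) = (\<Sum>a\<in>G2. smul (c2 a) (\<phi> a))"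
proof -
  define e where "e a = (if a \<in> G1 then c1 a else 0) - (if a \<in> G2 then c2 a else 0)" for a
  have "(\<Sum>a\<in>G1 \<union> G2. smul (e a) a) \<in> {0}"
    unfolding e_def lincomb_Un_diff[OF G1(1) G2(1), of c1 c2 "\<lambda>a. a"] eq by simp
  then have "\<forall>a\<in>G1 \<union> G2. e a = 0" using indep_modD[OF IA] G1 G2 by blast
  then have "(\<Sum>a\<in>G1 \<union> G2. smul (e a) (\<phi> a)) = 0" by simp
  then show ?thesis unfolding e_def lincomb_Un_diff[OF G1(1) G2(1)] by simp
qed

lemma linear_extension:
  assumes IA: "indep_mod {0} A"
  obtains L where
    "\<And>G c. finite G \<Longrightarrow> G \<subseteq> A \<Longrightarrow> L (\<Sum>a\<in>G. smul (c a) a) = (\<Sum>a\<in>G. smul (c a) (\<phi> a))"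
    "\<And>x y. x \<in> span A \<Longrightarrow> y \<in> span A \<Longrightarrow> L (x + y) = L x + L y"
    "\<And>c x. x \<in> span A \<Longrightarrow> L (smul c x) = smul c (L x)"
proof
  define L where "L x = (SOME y. \<exists>G c. finite G \<and> G \<subseteq> A \<and>
      x = (\<Sum>a\<in>G. smul (c a) a) \<and> y = (\<Sum>a\<in>G. smul (c a) (\<phi> a)))" for x
  show L: "L (\<Sum>a\<in>G. smul (c a) a) = (\<Sum>a\<in>G. smul (c a) (\<phi> a))" if G: "finite G" "G \<subseteq> A" for G c
    unfolding L_def
  proof (rule someI2)
    show "\<exists>G' c'. finite G' \<and> G' \<subseteq> A \<and> (\<Sum>a\<in>G. smul (c a) a) = (\<Sum>a\<in>G'. smul (c' a) a)
        \<and> (\<Sum>a\<in>G. smul (c a) (\<phi> a)) = (\<Sum>a\<in>G'. smul (c' a) (\<phi> a))"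
      using G by (intro exI[of _ G] exI[of _ c]) simp
  next
    fix y assume "\<exists>G' c'. finite G' \<and> G' \<subseteq> A \<and> (\<Sum>a\<in>G. smul (c a) a) = (\<Sum>a\<in>G'. smul (c' a) a)
        \<and> y = (\<Sum>a\<in>G'. smul (c' a) (\<phi> a))"
    then obtain G' c' where G': "finite G'" "G' \<subseteq> A"
        and eq: "(\<Sum>a\<in>G. smul (c a) a) = (\<Sum>a\<in>G'. smul (c' a) a)"
        and y: "y = (\<Sum>a\<in>G'. smul (c' a) (\<phi> a))"
      by blast
    show "y = (\<Sum>a\<in>G. smul (c a) (\<phi> a))"
      unfolding y using lincomb_transfer_unique[OF IA G G' eq] by simp
  qed
  show "L (x + y) = L x + L y" if x: "x \<in> span A" and y: "y \<in> span A" for x y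
  proof -
    obtain G1 c1 where G1: "finite G1" "G1 \<subseteq> A" "x = (\<Sum>a\<in>G1. smul (c1 a) a)"
      using x unfolding in_span_iff by blast
    obtain G2 c2 where G2: "finite G2" "G2 \<subseteq> A" "y = (\<Sum>a\<in>G2. smul (c2 a) a)"
      using y unfolding in_span_iff by blast
    define e where "e a = (if a \<in> G1 then c1 a else 0) + (if a \<in> G2 then c2 a else 0)" for a
    have "L (x + y) = L (\<Sum>a\<in>G1 \<union> G2. smul (e a) a)"
      unfolding e_def lincomb_Un_add[OF G1(1) G2(1), of c1 c2 "\<lambda>a. a"] G1(3) G2(3) ..
    also have "\<dots> = (\<Sum>a\<in>G1 \<union> G2. smul (e a) (\<phi> a))" using G1 G2 by (intro L) auto
    also have "\<dots> = L x + L y"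
      unfolding e_def lincomb_Un_add[OF G1(1) G2(1)] G1(3) G2(3) L[OF G1(1,2)] L[OF G2(1,2)] ..
    finally show ?thesis .
  qed
  show "L (smul k x) = smul k (L x)" if x: "x \<in> span A" for k x
  proof -
    obtain G c where G: "finite G" "G \<subseteq> A" "x = (\<Sum>a\<in>G. smul (c a) a)"
      using x unfolding in_span_iff by blast
    have "L (smul k x) = L (\<Sum>a\<in>G. smul (k * c a) a)"
      unfolding G(3) smul_sum_right smul_assoc ..
    also have "\<dots> = (\<Sum>a\<in>G. smul (k * c a) (\<phi> a))" by (rule L[OF G(1,2)])
    also have "\<dots> = smul k (L x)"
      by (simp only: G(3) L[OF G(1,2)] smul_sum_right smul_assoc)
    finally show ?thesis .
  qed
qed

lemma GG_if_eqpoll: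
  assumes X: "subspace smul X" and A: "basis_mod {0} X A" and B: "basis_mod X UNIV B"
    and AB: "A \<approx> B"
  shows "X \<in> GG smul"
proof -
  obtain \<phi> where "bij_betw \<phi> A B" using AB unfolding eqpoll_def by blast
  then have inj: "inj_on \<phi> A" and im: "\<phi> ` A = B" unfolding bij_betw_def by auto
  have IA: "indep_mod {0} A" and SA: "span A = X" using A by (simp_all add: basis_mod_zero_iff)
  have IB: "indep_mod X (\<phi> ` A)" and SB: "span (X \<union> \<phi> ` A) = UNIV"
    using B im unfolding basis_mod_def by auto
  have AX: "A \<subseteq> X" using span_superset[of A] SA by simp
  obtain L where L: "\<And>G c. finite G \<Longrightarrow> G \<subseteq> A \<Longrightarrow> L (\<Sum>a\<in>G. smul (c a) a) = (\<Sum>a\<in>G. smul (c a) (\<phi> a))"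
    and L_add: "\<And>x y. x \<in> X \<Longrightarrow> y \<in> X \<Longrightarrow> L (x + y) = L x + L y"
    and L_smul: "\<And>c x. x \<in> X \<Longrightarrow> L (smul c x) = smul c (L x)"
    by (rule linear_extension[OF IA, of \<phi>, unfolded SA]) (rule that)
  define g where "g x = coset (L x) X" for x
  have inj_g: "inj_on g X"
  proof (rule inj_onI)
    fix x x' assume x: "x \<in> X" "x' \<in> X" and eq: "g x = g x'"
    obtain G c where G: "finite G" "G \<subseteq> A" "x - x' = (\<Sum>a\<in>G. smul (c a) a)"
      using subspace_diff[OF X x] unfolding SA[symmetric] in_span_iff by blast
    have "L (x - x') = L x - L x'"
      using L_add[OF x(1) subspace_smul[OF X x(2), of "-1"]] L_smul[OF x(2), of "-1"]
      by (simp add: smul_minus_one)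
    then have "(\<Sum>a\<in>G. smul (c a) (\<phi> a)) \<in> X"
      using eq L[OF G(1,2)] G(3) unfolding g_def coset_eq_iff[OF X] by simp
    then have "\<forall>a\<in>G. c a = 0" using IB G(1,2) unfolding indep_mod_image_iff[OF inj] by blast
    then show "x = x'" using G(3) by simp
  qed
  have im_g: "g ` X = quotient_space X"
  proof
    show "g ` X \<subseteq> quotient_space X" unfolding g_def quotient_space_def by blast
    show "quotient_space X \<subseteq> g ` X"
    proof
      fix Q assume "Q \<in> quotient_space X"
      then obtain v where Q: "Q = coset v X" unfolding quotient_space_def by blast
      obtain x0 G c where G: "x0 \<in> X" "finite G" "G \<subseteq> A" "v = x0 + (\<Sum>a\<in>G. smul (c a) (\<phi> a))"
        using in_span_Un_imageE[OF X inj, of v] SB by blast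
      have z: "(\<Sum>a\<in>G. smul (c a) a) \<in> X" by (rule subspace_lincomb[OF X]) (use G(3) AX in blast)
      have "g (\<Sum>a\<in>G. smul (c a) a) = Q"
        unfolding g_def Q coset_eq_iff[OF X] L[OF G(2,3)] using subspace_minus[OF X G(1)] G(4) by simp
      then show "Q \<in> g ` X" using z by blast
    qed
  qed
  have "iso_to_quotient smul X"
    unfolding iso_to_quotient_def bij_betw_def
    using inj_g im_g L_add L_smul qadd_coset[OF X] qsmul_coset[OF X]
    by (intro exI[of _ g]) (simp add: g_def)
  then show ?thesis using X unfolding GG_def by blast
qed

lemma iso_quotient_lincomb:
  assumes X: "subspace smul X" and g_im: "\<And>x. x \<in> X \<Longrightarrow> g x \<in> quotient_space X"
    and g_add: "\<And>x y. x \<in> X \<Longrightarrow> y \<in> X \<Longrightarrow> g (x + y) = qadd (g x) (g y)"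
    and g_smul: "\<And>c x. x \<in> X \<Longrightarrow> g (smul c x) = qsmul smul X c (g x)"
    and \<beta>: "\<And>a. a \<in> A \<Longrightarrow> g a = coset (\<beta> a) X" and AX: "A \<subseteq> X"
    and G: "finite G" "G \<subseteq> A"
  shows "g (\<Sum>a\<in>G. smul (c a) a) = coset (\<Sum>a\<in>G. smul (c a) (\<beta> a)) X"
  using G
proof (induction G rule: finite_induct)
  case empty
  obtain u where "g 0 = coset u X" using g_im[OF subspace_zero[OF X]] unfolding quotient_space_def by blast
  then show ?case using g_smul[OF subspace_zero[OF X], of 0] qsmul_coset[OF X] by simp
next
  case (insert a G)
  have aX: "a \<in> X" using insert AX by blast
  have sX: "(\<Sum>a\<in>G. smul (c a) a) \<in> X" using insert AX by (intro subspace_lincomb[OF X]) blast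
  have "g (\<Sum>a\<in>insert a G. smul (c a) a) = qadd (g (smul (c a) a)) (g (\<Sum>a\<in>G. smul (c a) a))"
    using insert g_add[OF subspace_smul[OF X aX] sX] by simp
  also have "\<dots> = coset (\<Sum>a\<in>insert a G. smul (c a) (\<beta> a)) X"
    using insert g_smul[OF aX] \<beta> qsmul_coset[OF X] qadd_coset[OF X] by simp
  finally show ?case .
qed

lemma GG_complement_basis:
  assumes GX: "X \<in> GG smul" and A: "basis_mod {0} X A"
  shows "\<exists>B. basis_mod X UNIV B \<and> A \<approx> B"
proof -
  have X: "subspace smul X" using GX unfolding GG_def by blast
  have IA: "indep_mod {0} A" and SA: "span A = X" using A by (simp_all add: basis_mod_zero_iff)
  have AX: "A \<subseteq> X" using span_superset[of A] SA by simp
  obtain g where bij: "bij_betw g X (quotient_space X)"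
    and g_add: "\<forall>x\<in>X. \<forall>y\<in>X. g (x + y) = qadd (g x) (g y)"
    and g_smul: "\<forall>c. \<forall>x\<in>X. g (smul c x) = qsmul smul X c (g x)"
    using GX unfolding GG_def iso_to_quotient_def by blast
  have inj: "inj_on g X" and im: "g ` X = quotient_space X" using bij unfolding bij_betw_def by auto
  define \<beta> where "\<beta> x = (SOME u. g x = coset u X)" for x
  have \<beta>: "g x = coset (\<beta> x) X" if x: "x \<in> X" for x
  proof -
    have "\<exists>u. g x = coset u X" using im x unfolding quotient_space_def by blast
    then show ?thesis unfolding \<beta>_def by (rule someI_ex)
  qed
  have g_lincomb: "g (\<Sum>a\<in>G. smul (c a) a) = coset (\<Sum>a\<in>G. smul (c a) (\<beta> a)) X"
    if "finite G" "G \<subseteq> A" for G c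
  proof (rule iso_quotient_lincomb[OF X _ _ _ _ AX that])
    show "g x \<in> quotient_space X" if "x \<in> X" for x using im that by blast
    show "g (x + y) = qadd (g x) (g y)" if "x \<in> X" "y \<in> X" for x y using g_add that by blast
    show "g (smul c x) = qsmul smul X c (g x)" if "x \<in> X" for c x using g_smul that by blast
    show "g a = coset (\<beta> a) X" if "a \<in> A" for a using \<beta> AX that by blast
  qed
  have inj\<beta>: "inj_on \<beta> A"
    using inj_onD[OF inj] \<beta> AX by (intro inj_onI) (metis subsetD)
  have "indep_mod X (\<beta> ` A)"
    unfolding indep_mod_image_iff[OF inj\<beta>]
  proof (intro allI impI ballI)
    fix G c a assume G: "finite G" "G \<subseteq> A" "(\<Sum>a\<in>G. smul (c a) (\<beta> a)) \<in> X" and a: "a \<in> G"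
    have z: "(\<Sum>a\<in>G. smul (c a) a) \<in> X" by (rule subspace_lincomb[OF X]) (use G(2) AX in blast)
    have "g (\<Sum>a\<in>G. smul (c a) a) = g 0"
      using g_lincomb[OF G(1,2)] g_lincomb[of "{}"] G(3) coset_eq_iff[OF X] by simp
    then have "(\<Sum>a\<in>G. smul (c a) a) = 0" using inj_onD[OF inj _ z subspace_zero[OF X]] by blast
    then show "c a = 0" using indep_modD[OF IA G(1,2) _ a] by simp
  qed
  moreover have "span (X \<union> \<beta> ` A) = UNIV"
  proof -
    have "v \<in> span (X \<union> \<beta> ` A)" for v
    proof -
      have "coset v X \<in> g ` X" using im unfolding quotient_space_def by blast
      then obtain z where z: "z \<in> X" "g z = coset v X" by (metis imageE)
      then obtain G c where G: "finite G" "G \<subseteq> A" "z = (\<Sum>a\<in>G. smul (c a) a)"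
        unfolding SA[symmetric] in_span_iff by blast
      have "coset v X = coset (\<Sum>a\<in>G. smul (c a) (\<beta> a)) X"
        using z(2) g_lincomb[OF G(1,2)] G(3) by simp
      then have "v - (\<Sum>a\<in>G. smul (c a) (\<beta> a)) \<in> X" unfolding coset_eq_iff[OF X] .
      then have "v - (\<Sum>a\<in>G. smul (c a) (\<beta> a)) \<in> span (X \<union> \<beta> ` A)"
        by (rule span_base[OF UnI1])
      moreover have "(\<Sum>a\<in>G. smul (c a) (\<beta> a)) \<in> span (X \<union> \<beta> ` A)"
        by (rule span_lincomb) (use G(2) in \<open>blast intro: span_base\<close>)
      ultimately show ?thesis using span_add by fastforce
    qed
    then show ?thesis by blast
  qed
  moreover have "A \<approx> \<beta> ` A" using inj_on_image_eqpoll_self[OF inj\<beta>] eqpoll_sym by blast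
  ultimately show ?thesis unfolding basis_mod_def by blast
qed

lemma GG_iff_eqpoll:
  assumes X: "subspace smul X" and A: "basis_mod {0} X A" and B: "basis_mod X UNIV B"
  shows "X \<in> GG smul \<longleftrightarrow> A \<approx> B"
proof
  assume "X \<in> GG smul"
  then obtain B' where "basis_mod X UNIV B'" "A \<approx> B'" using GG_complement_basis A by blast
  then show "A \<approx> B" using basis_mod_eqpoll[OF X _ B] eqpoll_trans by blast
qed (rule GG_if_eqpoll[OF X A B])

lemma GG_basis_infinite:
  assumes ID: "infinite_dimensional smul" and GX: "X \<in> GG smul" and A: "basis_mod {0} X A"
  shows "infinite A"
proof
  assume fA: "finite A"
  obtain B where B: "basis_mod X UNIV B" "A \<approx> B" using GG_complement_basis[OF GX A] by blast
  have "finite B" using eqpoll_finite_iff[OF B(2)] fA by simp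
  moreover have "span (A \<union> B) = UNIV"
    using A B(1) span_Un_span_left[of A B] unfolding basis_mod_def by simp
  ultimately show False using ID fA unfolding infinite_dimensional_def by blast
qed

lemma GG_not_fin_codim:
  assumes ID: "infinite_dimensional smul" and GX: "X \<in> GG smul"
  shows "\<not> fin_codim X UNIV"
proof
  assume "fin_codim X UNIV"
  then obtain F where F: "finite F" "basis_mod X UNIV F" unfolding fin_codim_def by blast
  have X: "subspace smul X" using GX unfolding GG_def by blast
  obtain A where A: "basis_mod {0} X A" using basis_exists[OF X] by blast
  have "A \<approx> F" using GG_iff_eqpoll[OF X A F(2)] GX by blast
  then show False using GG_basis_infinite[OF ID GX A] F(1) eqpoll_finite_iff by blast
qed

text \<open>Bases of X and of Z both extend a basis of W by finitely many vectors, and bases of their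
  complements both extend a basis of a complement of X + Z by finitely many vectors; finite
  parts do not change the infinite cardinalities involved.\<close>

lemma GG_commensurable:
  assumes ID: "infinite_dimensional smul" and GX: "X \<in> GG smul" and Z: "subspace smul Z"
    and W: "subspace smul W" "W \<subseteq> X" "W \<subseteq> Z" and fX: "fin_codim W X" and fZ: "fin_codim W Z"
  shows "Z \<in> GG smul"
proof -
  have X: "subspace smul X" using GX unfolding GG_def by blast
  obtain xs zs where xs: "finite xs" "basis_mod W X xs" and zs: "finite zs" "basis_mod W Z zs"
    using fX fZ unfolding fin_codim_def by blast
  define S where "S = span (X \<union> Z)"
  have "S = span (X \<union> zs)"
  proof -
    have "S = span (X \<union> span (W \<union> zs))" using zs(2) unfolding S_def basis_mod_def by simp
    also have "\<dots> = span (X \<union> zs)" using W(2) by (simp add: span_Un_span_right Un_absorb2 Un_assoc[symmetric])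
    finally show ?thesis .
  qed
  then obtain zs' where zs': "zs' \<subseteq> zs" "basis_mod X S zs'"
    using basis_mod_subset_exists[OF X, of zs] by auto
  have "S = span (Z \<union> xs)"
  proof -
    have "S = span (Z \<union> span (W \<union> xs))" using xs(2) unfolding S_def basis_mod_def by (simp add: Un_commute)
    also have "\<dots> = span (Z \<union> xs)" using W(3) by (simp add: span_Un_span_right Un_absorb2 Un_assoc[symmetric])
    finally show ?thesis .
  qed
  then obtain xs' where xs': "xs' \<subseteq> xs" "basis_mod Z S xs'"
    using basis_mod_subset_exists[OF Z, of xs] by auto
  obtain A where A: "basis_mod {0} W A" using basis_exists[OF W(1)] by blast
  obtain D where D: "basis_mod S UNIV D"
    using basis_mod_exists[OF subspace_span subspace_UNIV, of "X \<union> Z"] unfolding S_def by blast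
  have "A \<union> xs \<approx> zs' \<union> D"
    using GX GG_iff_eqpoll[OF X basis_mod_Un[OF subspace_singleton_zero A xs(2), THEN conjunct1]
        basis_mod_Un[OF X zs'(2) D, THEN conjunct1]] by blast
  moreover have infA: "infinite A"
    using GG_basis_infinite[OF ID GX basis_mod_Un[OF subspace_singleton_zero A xs(2), THEN conjunct1]]
      xs(1) by simp
  moreover have fin: "finite zs'" "finite xs'" using xs' zs' xs(1) zs(1) finite_subset by blast+
  ultimately have AD: "A \<approx> D \<union> zs'"
    unfolding eqpoll_Un_finite_iff[OF infA xs(1)] by (simp add: Un_commute)
  then have infD: "infinite D" using eqpoll_finite_iff[OF AD] infA fin(1) by simp
  have "D \<approx> A" using eqpoll_sym[OF AD] unfolding eqpoll_Un_finite_iff[OF infD fin(1)] .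
  then have "xs' \<union> D \<approx> A" unfolding Un_commute[of xs'] eqpoll_Un_finite_iff[OF infD fin(2)] .
  then have "A \<union> zs \<approx> xs' \<union> D" unfolding eqpoll_Un_finite_iff[OF infA zs(1)] by (rule eqpoll_sym)
  then show ?thesis
    using GG_iff_eqpoll[OF Z basis_mod_Un[OF subspace_singleton_zero A zs(2), THEN conjunct1]
        basis_mod_Un[OF Z xs'(2) D, THEN conjunct1]] by blast
qed

lemma GG_hyperplane:
  assumes ID: "infinite_dimensional smul" and GX: "X \<in> GG smul"
    and H: "subspace smul H" "qdim smul X H 1"
  shows "H \<in> GG smul"
proof -
  have f: "fin_codim H X" using H qdim_iff_codim by blast
  show ?thesis
    by (rule GG_commensurable[OF ID GX H(1) H(1) fin_codim_subset[OF f] _ f codim_refl[OF H(1), THEN conjunct1]])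
      simp
qed

lemma basis_mod_span_disjoint:
  assumes I: "indep_mod {0} M" and N: "N \<union> N' \<subseteq> M" "N \<inter> N' = {}"
  shows "basis_mod (span N) (span (N \<union> N')) N'"
proof -
  have "indep_mod (span ({0} \<union> N)) N'"
    using indep_mod_span_Un[OF subspace_singleton_zero indep_mod_subset[OF I N(1)] N(2)] .
  then show ?thesis unfolding basis_mod_def span_Un_zero span_Un_span_left by simp
qed

lemma GG_complementary_pair:
  assumes ID: "infinite_dimensional smul"
  obtains X Y where "X \<in> GG smul" "Y \<in> GG smul" "X \<inter> Y = {0}" "ssum X Y = UNIV"
proof -
  obtain M where M: "basis_mod {0} UNIV M" using basis_exists[OF subspace_UNIV] by blast
  then have IM: "indep_mod {0} M" and SM: "span M = UNIV" by (simp_all add: basis_mod_zero_iff)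
  have "infinite M" using ID SM unfolding infinite_dimensional_def by auto
  then obtain M1 M2 where M12: "M1 \<union> M2 = M" "M1 \<inter> M2 = {}" "M1 \<approx> M2"
    using infinite_split_eqpoll by metis
  have basis: "basis_mod {0} (span N) N" "basis_mod (span N) UNIV N'"
    if "N \<union> N' = M" "N \<inter> N' = {}" for N N'
    using indep_mod_subset[OF IM] basis_mod_span_disjoint[OF IM, of N N'] SM that
    unfolding basis_mod_def by auto
  have GX: "span M1 \<in> GG smul" using GG_if_eqpoll[OF subspace_span basis[OF M12(1,2)] M12(3)] .
  have "M2 \<union> M1 = M" "M2 \<inter> M1 = {}" using M12 by blast+
  then have GY: "span M2 \<in> GG smul"
    using GG_if_eqpoll[OF subspace_span basis] M12(3) eqpoll_sym by blast
  have "span M1 \<inter> span M2 \<subseteq> {0}"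
  proof
    fix v assume v: "v \<in> span M1 \<inter> span M2"
    then have "v \<in> span M2" by blast
    then obtain G c where G: "finite G" "G \<subseteq> M2" "v = (\<Sum>s\<in>G. smul (c s) s)"
      unfolding in_span_iff by blast
    have "indep_mod (span M1) M2" using basis(2)[OF M12(1,2)] unfolding basis_mod_def by blast
    then have "\<forall>s\<in>G. c s = 0" using indep_modD[OF _ G(1,2), of "span M1" c] v G(3) by blast
    then show "v \<in> {0}" using G(3) by simp
  qed
  then have "span M1 \<inter> span M2 = {0}" by auto
  moreover have "ssum (span M1) (span M2) = UNIV"
    using SM M12(1) span_Un_span_left[of M1 "span M2"] span_Un_span_right[of M1 M2]
    by (simp add: ssum_eq_span)
  ultimately show ?thesis using that GX GY by blast
qed

subsection \<open>Distance in the Grassmann graph\<close>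

lemma codim_sup_le:
  assumes X: "subspace smul X" and U: "subspace smul U" and XU: "X \<subseteq> U" and f: "fin_codim X W"
  shows "fin_codim U (span (U \<union> W)) \<and> codim U (span (U \<union> W)) \<le> codim X W"
proof -
  obtain F where F: "finite F" "basis_mod X W F" using f unfolding fin_codim_def by blast
  have W: "W = span (X \<union> F)" using F(2) unfolding basis_mod_def by auto
  have "span (U \<union> W) = span (U \<union> F)"
    unfolding W span_Un_span_right using XU by (simp add: Un_assoc[symmetric] Un_absorb2)
  then show ?thesis using fin_codim_span[OF U F(1)] codim_eq_card[OF X F] by simp
qed

definition equicodim :: "'v set \<Rightarrow> 'v set \<Rightarrow> bool" where
  "equicodim X Y \<longleftrightarrow> fin_codim X (span (X \<union> Y)) \<and> fin_codim Y (span (X \<union> Y))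
     \<and> codim X (span (X \<union> Y)) = codim Y (span (X \<union> Y))"

lemma equicodim_iff_qdim:
  assumes "subspace smul X" "subspace smul Y"
  shows "(\<exists>d. qdim smul (ssum X Y) X d \<and> qdim smul (ssum X Y) Y d) \<longleftrightarrow> equicodim X Y"
  unfolding ssum_eq_span[OF assms] qdim_iff_codim[OF assms(1)] qdim_iff_codim[OF assms(2)] equicodim_def
  by auto

lemma equicodim_refl: "subspace smul X \<Longrightarrow> equicodim X X"
  unfolding equicodim_def by (simp add: span_eq_subspace codim_refl)

lemma equicodim_sym: "equicodim X Y \<Longrightarrow> equicodim Y X"
  unfolding equicodim_def by (simp add: Un_commute)

lemma equicodim_iff_codim_sup:
  assumes X: "subspace smul X" and Y: "subspace smul Y" and S: "subspace smul S"
    and XS: "X \<subseteq> S" and YS: "Y \<subseteq> S" and fX: "fin_codim X S" and fY: "fin_codim Y S"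
  shows "equicodim X Y \<longleftrightarrow> codim X S = codim Y S"
proof -
  have P: "X \<subseteq> span (X \<union> Y)" "Y \<subseteq> span (X \<union> Y)" "span (X \<union> Y) \<subseteq> S"
    using span_superset[of "X \<union> Y"] span_minimal[OF S, of "X \<union> Y"] XS YS by auto
  show ?thesis
    using codim_split[OF X subspace_span P(1,3) fX] codim_split[OF Y subspace_span P(2,3) fY]
    unfolding equicodim_def by auto
qed

lemma equicodim_trans:
  assumes X: "subspace smul X" and Y: "subspace smul Y" and Z: "subspace smul Z"
    and XY: "equicodim X Y" and YZ: "equicodim Y Z"
  shows "equicodim X Z"
proof -
  define P Q S where "P = span (X \<union> Y)" and "Q = span (Y \<union> Z)" and "S = span (P \<union> Q)"
  have sub: "X \<subseteq> P" "Y \<subseteq> P" "Y \<subseteq> Q" "Z \<subseteq> Q" "P \<subseteq> S" "Q \<subseteq> S"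
    unfolding P_def Q_def S_def using span_superset by blast+
  have f: "fin_codim X P" "fin_codim Y P" "fin_codim Y Q" "fin_codim Z Q"
    using XY YZ unfolding equicodim_def P_def Q_def by auto
  have sS: "subspace smul S" "subspace smul P" "subspace smul Q" unfolding S_def P_def Q_def by simp_all
  have "fin_codim P (span (P \<union> Q))" "fin_codim Q (span (Q \<union> P))"
    using codim_sup_le[OF Y sS(2) sub(2) f(3)] codim_sup_le[OF Y sS(3) sub(3) f(2)] by auto
  then have fS: "fin_codim P S" "fin_codim Q S" unfolding S_def by (auto simp: Un_commute)
  have "X \<subseteq> S" "Y \<subseteq> S" "Z \<subseteq> S" using sub by blast+
  moreover have "fin_codim X S" "fin_codim Y S" "fin_codim Z S"
    using codim_trans[OF X f(1) fS(1)] codim_trans[OF Y f(2) fS(1)] codim_trans[OF Z f(4) fS(2)] by auto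
  moreover have "equicodim X Y" "equicodim Y Z" using XY YZ .
  ultimately show ?thesis
    using equicodim_iff_codim_sup[OF _ _ sS(1)] X Y Z by metis
qed

lemma edge_imp_equicodim:
  assumes "grassmann_edge smul X Y"
  shows "equicodim X Y \<and> codim X (span (X \<union> Y)) = 1"
proof -
  have "X \<in> GG smul" "Y \<in> GG smul" and A: "adjacent smul X Y"
    using assms unfolding grassmann_edge_def by auto
  then have X: "subspace smul X" and Y: "subspace smul Y" unfolding GG_def by auto
  show ?thesis
    using A unfolding adjacent_def ssum_eq_span[OF X Y] qdim_iff_codim[OF X] qdim_iff_codim[OF Y]
      equicodim_def by auto
qed

lemma component_imp_equicodim:
  assumes GX: "X \<in> GG smul" and C: "(grassmann_edge smul)\<^sup>*\<^sup>* X Y"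
  shows "Y \<in> GG smul \<and> equicodim X Y"
  using C
proof (induction rule: rtranclp_induct)
  case base
  then show ?case using GX equicodim_refl unfolding GG_def by blast
next
  case (step Y Z)
  then have "Z \<in> GG smul" "equicodim Y Z"
    using edge_imp_equicodim[OF step(2)] unfolding grassmann_edge_def by auto
  then show ?case using equicodim_trans GX step.IH unfolding GG_def by blast
qed

lemma codim_le_path_length:
  assumes Y: "subspace smul Y"
  shows "(grassmann_edge smul ^^ k) Y Z \<Longrightarrow> fin_codim Y (span (Y \<union> Z)) \<and> codim Y (span (Y \<union> Z)) \<le> k"
proof (induction k arbitrary: Z)
  case 0
  then show ?case using Y by (simp add: span_eq_subspace codim_refl)
next
  case (Suc k)
  obtain Z0 where Z0: "(grassmann_edge smul ^^ k) Y Z0" "grassmann_edge smul Z0 Z"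
    using Suc.prems by (rule relpowp_Suc_E)
  define U T where "U = span (Y \<union> Z0)" and "T = span (U \<union> span (Z0 \<union> Z))"
  have e: "equicodim Z0 Z" "codim Z0 (span (Z0 \<union> Z)) = 1" using edge_imp_equicodim[OF Z0(2)] by auto
  have IH: "fin_codim Y U" "codim Y U \<le> k" using Suc.IH[OF Z0(1)] unfolding U_def by auto
  have Z0: "subspace smul Z0" using Z0(2) unfolding grassmann_edge_def GG_def by blast
  have "Z0 \<subseteq> U" unfolding U_def using span_superset[of "Y \<union> Z0"] by blast
  then have UT: "fin_codim U T" "codim U T \<le> 1"
    using codim_sup_le[OF Z0 _ _ e(1)[unfolded equicodim_def, THEN conjunct1], of U] e(2)
    unfolding U_def T_def by auto
  have YT: "fin_codim Y T" "codim Y T = codim Y U + codim U T" using codim_trans[OF Y IH(1) UT(1)] by auto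
  have "Y \<subseteq> span (Y \<union> Z)" "span (Y \<union> Z) \<subseteq> T"
    unfolding T_def U_def using span_superset[of "Y \<union> Z"]
    by (auto intro!: span_mono simp: span_Un_span_left span_Un_span_right)
  then show ?case using codim_split[OF Y subspace_span _ _ YT(1)] YT(2) IH(2) UT(2) by fastforce
qed

subsection \<open>Connecting subspaces of equal codimension\<close>

lemma hyperplane_between:
  assumes X: "subspace smul X" and W: "subspace smul W" "W \<subseteq> X" and x: "x \<in> X" "x \<notin> W"
  obtains H where "subspace smul H" "W \<subseteq> H" "H \<subseteq> X" "x \<notin> H" "X = span (H \<union> {x})"
proof -
  obtain M where M: "M \<subseteq> X" "indep_mod (span (W \<union> {x})) M" "X \<subseteq> span (span (W \<union> {x}) \<union> M)"
    using indep_mod_extend[OF subspace_span] by blast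
  define H where "H = span (W \<union> M)"
  have "indep_mod W ({x} \<union> M)"
    using indep_mod_Un[OF W(1) indep_mod_singleton[OF W(1) x(2)]] M(2) by simp
  moreover have "x \<notin> M" using indep_mod_notin[OF M(2)] span_superset[of "W \<union> {x}"] by blast
  ultimately have xH: "x \<notin> H"
    using indep_mod_notin_span[OF W(1), of "{x} \<union> M" x] unfolding H_def by (simp add: insert_Diff_if)
  have HX: "H \<subseteq> X" unfolding H_def using M(1) W(2) by (intro span_minimal[OF X]) blast
  have XH: "X = span (H \<union> {x})"
  proof
    show "X \<subseteq> span (H \<union> {x})"
      using M(3) span_Un_span_left[of "W \<union> {x}" M] span_Un_span_left[of "W \<union> M" "{x}"]
      unfolding H_def by (simp add: ac_simps)
    show "span (H \<union> {x}) \<subseteq> X" using HX x(1) by (intro span_minimal[OF X]) blast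
  qed
  have WH: "W \<subseteq> H" unfolding H_def using span_superset by blast
  show ?thesis using that[OF _ WH HX xH XH] unfolding H_def by simp
qed

lemma adjacent_hyperplane_extensions:
  assumes H: "subspace smul H" and x: "x \<notin> H" and y: "y \<notin> span (H \<union> {x})"
  shows "adjacent smul (span (H \<union> {x})) (span (H \<union> {y}))"
proof -
  define X X' where "X = span (H \<union> {x})" and "X' = span (H \<union> {y})"
  have "x \<notin> X'"
  proof
    assume "x \<in> X'"
    then have "y \<in> span (insert x H)"
      using span_exchange[of x y H] x span_eq_subspace[OF H] unfolding X'_def by simp
    then show False using y by simp
  qed
  have HX: "H \<subseteq> X" "H \<subseteq> X'" unfolding X_def X'_def using span_superset by blast+
  have sX: "subspace smul X" "subspace smul X'" unfolding X_def X'_def by simp_all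
  have "span (X \<union> X') = span (X \<union> {y})" "span (X' \<union> X) = span (X' \<union> {x})"
    unfolding X_def X'_def span_Un_span_left span_Un_span_right using HX
    by (auto simp: ac_simps Un_absorb)
  then have "basis_mod X (span (X \<union> X')) {y}" "basis_mod X' (span (X \<union> X')) {x}"
    using indep_mod_singleton[OF sX(1) y[folded X_def]] indep_mod_singleton[OF sX(2) \<open>x \<notin> X'\<close>]
    unfolding basis_mod_def by (simp_all add: Un_commute)
  then show ?thesis
    using basis_mod_imp_qdim[of "{y}"] basis_mod_imp_qdim[of "{x}"]
    unfolding adjacent_def X_def X'_def ssum_eq_span[OF subspace_span subspace_span] by simp
qed

lemma hyperplane_extension_notin:
  assumes X: "subspace smul X" and Y: "subspace smul Y" and H: "subspace smul H"
    and XYH: "X \<inter> Y \<subseteq> H" "H \<subseteq> X" and x: "x \<in> X" "x \<notin> H" and y: "y \<in> Y"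
  shows "x \<notin> span (span (H \<union> {y}) \<union> Y)"
proof
  assume "x \<in> span (span (H \<union> {y}) \<union> Y)"
  moreover have "span (span (H \<union> {y}) \<union> Y) = ssum H Y"
    using y unfolding span_Un_span_left ssum_eq_span[OF H Y] by (simp add: insert_absorb)
  ultimately obtain h y0 where hy: "x = h + y0" "h \<in> H" "y0 \<in> Y" unfolding ssum_def by blast
  then have "y0 \<in> X" using subspace_diff[OF X x(1), of h] XYH(2) by (simp add: subsetD)
  then have "y0 \<in> H" using hy(3) XYH(1) by blast
  then show False using hy subspace_add[OF H] x(2) by blast
qed

lemma edge_towards:
  assumes ID: "infinite_dimensional smul" and GX: "X \<in> GG smul" and GY: "Y \<in> GG smul"
    and XY: "equicodim X Y" and d: "codim X (span (X \<union> Y)) \<noteq> 0"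
  obtains X' where "grassmann_edge smul X X'" "X' \<in> GG smul" "equicodim X' Y"
    "codim X' (span (X' \<union> Y)) < codim X (span (X \<union> Y))"
proof -
  have X: "subspace smul X" and Y: "subspace smul Y" using GX GY unfolding GG_def by auto
  define P where "P = span (X \<union> Y)"
  have sP: "subspace smul P" and XP: "X \<subseteq> P" and YP: "Y \<subseteq> P"
    unfolding P_def using span_superset[of "X \<union> Y"] by auto
  have f: "fin_codim X P" "fin_codim Y P" and e: "codim X P = codim Y P"
    using XY unfolding equicodim_def P_def by auto
  have "\<not> Y \<subseteq> X" using d codim_refl[OF X] span_Un_subspace_self[OF X] unfolding P_def by auto
  moreover have "\<not> X \<subseteq> Y"
    using d e codim_refl[OF Y] span_Un_subspace_self[OF Y, of X] unfolding P_def by (auto simp: Un_commute)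
  ultimately obtain x y where x: "x \<in> X" "x \<notin> Y" and y: "y \<in> Y" "y \<notin> X" by blast
  obtain H where H: "subspace smul H" "X \<inter> Y \<subseteq> H" "H \<subseteq> X" "x \<notin> H" "X = span (H \<union> {x})"
    using hyperplane_between[OF X subspace_Int[OF X Y]] x by blast
  define X' where "X' = span (H \<union> {y})"
  have sX': "subspace smul X'" and HX': "H \<subseteq> X'" and X'P: "X' \<subseteq> P"
    unfolding X'_def using span_superset[of "H \<union> {y}"] H(3) XP YP y(1)
    by (auto intro!: span_minimal[OF sP])
  have HX: "basis_mod H X {x}" "basis_mod H X' {y}"
    using indep_mod_singleton[OF H(1)] H(3-5) y(2) unfolding basis_mod_def X'_def by auto
  then have cH: "fin_codim H X" "codim H X = 1" "fin_codim H X'" "codim H X' = 1"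
    using codim_eq_card[OF H(1) _ HX(1)] codim_eq_card[OF H(1) _ HX(2)] unfolding fin_codim_def by auto
  have GX': "X' \<in> GG smul" using GG_commensurable[OF ID GX sX' H(1) H(3) HX' cH(1,3)] .
  have "grassmann_edge smul X X'"
    using adjacent_hyperplane_extensions[OF H(1,4)] y(2) H(5) GX GX'
    unfolding grassmann_edge_def X'_def by simp
  moreover have fX'P: "fin_codim X' P" "codim X' P = codim X P"
    using codim_trans[OF H(1) cH(1) f(1)] codim_split[OF H(1) sX' HX' X'P] cH by auto
  moreover have "equicodim X' Y"
    using equicodim_iff_codim_sup[OF sX' Y sP X'P YP fX'P(1) f(2)] fX'P(2) e by simp
  moreover have "codim X' (span (X' \<union> Y)) < codim X P"
  proof -
    have P': "X' \<subseteq> span (X' \<union> Y)" "span (X' \<union> Y) \<subseteq> P"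
      using span_superset[of "X' \<union> Y"] span_minimal[OF sP, of "X' \<union> Y"] X'P YP by auto
    have "x \<notin> span (X' \<union> Y)"
      using hyperplane_extension_notin[OF X Y H(1) H(2,3) x(1) H(4) y(1)] unfolding X'_def .
    then have "span (X' \<union> Y) \<noteq> P" using x(1) XP by blast
    then show ?thesis
      using codim_split[OF sX' subspace_span P' fX'P(1)] codim_eq_0_iff[OF subspace_span] fX'P(2)
      by fastforce
  qed
  ultimately show ?thesis using that GX' unfolding P_def by blast
qed

lemma equicodim_imp_path:
  assumes ID: "infinite_dimensional smul" and GY: "Y \<in> GG smul"
  shows "X \<in> GG smul \<Longrightarrow> equicodim X Y \<Longrightarrow> (grassmann_edge smul)\<^sup>*\<^sup>* X Y"
proof (induction "codim X (span (X \<union> Y))" arbitrary: X rule: less_induct)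
  case less
  have X: "subspace smul X" and Y: "subspace smul Y" using less.prems(1) GY unfolding GG_def by auto
  show ?case
  proof (cases "codim X (span (X \<union> Y)) = 0")
    case True
    have f: "fin_codim X (span (X \<union> Y))" "fin_codim Y (span (X \<union> Y))"
      and e: "codim X (span (X \<union> Y)) = codim Y (span (X \<union> Y))"
      using less.prems(2) unfolding equicodim_def by auto
    have "span (X \<union> Y) = X" "span (X \<union> Y) = Y"
      using True e codim_eq_0_iff[OF X f(1)] codim_eq_0_iff[OF Y f(2)] by simp_all
    then show ?thesis by simp
  next
    case False
    then obtain X' where "grassmann_edge smul X X'" "X' \<in> GG smul" "equicodim X' Y"
      "codim X' (span (X' \<union> Y)) < codim X (span (X \<union> Y))"
      using edge_towards[OF ID less.prems(1) GY less.prems(2)] by blast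
    then show ?thesis using less.hyps converse_rtranclp_into_rtranclp by metis
  qed
qed

lemma GG_equicodim_at_distance:
  assumes ID: "infinite_dimensional smul" and GX: "X \<in> GG smul"
  obtains Z where "Z \<in> GG smul" "equicodim X Z" "codim X (span (X \<union> Z)) = n"
proof -
  have X: "subspace smul X" using GX unfolding GG_def by blast
  obtain A where A: "basis_mod {0} X A" using basis_exists[OF X] by blast
  obtain B where B: "basis_mod X UNIV B" "A \<approx> B" using GG_complement_basis[OF GX A] by blast
  have infA: "infinite A" using GG_basis_infinite[OF ID GX A] .
  then have "infinite B" using eqpoll_finite_iff[OF B(2)] by blast
  obtain xs ys where xs: "finite xs" "card xs = n" "xs \<subseteq> A" and ys: "finite ys" "card ys = n" "ys \<subseteq> B"
    using infinite_arbitrarily_large[OF infA] infinite_arbitrarily_large[OF \<open>infinite B\<close>] by metis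
  have AB: "basis_mod {0} UNIV (A \<union> B)" "A \<inter> B = {}" using basis_mod_Un[OF subspace_singleton_zero A B(1)] by auto
  then have I: "indep_mod {0} (A \<union> B)" unfolding basis_mod_def by blast
  have SA: "span A = X" using A by (simp add: basis_mod_zero_iff)
  have dis: "(A - xs) \<inter> xs = {}" "(A - xs) \<inter> ys = {}" "A \<inter> ys = {}" "((A - xs) \<union> ys) \<inter> xs = {}"
    using AB(2) xs(3) ys(3) by blast+
  define H Z where "H = span (A - xs)" and "Z = span ((A - xs) \<union> ys)"
  have HX: "basis_mod H X xs"
    using basis_mod_span_disjoint[OF I _ dis(1)] xs(3) SA unfolding H_def by (simp add: Un_absorb2)
  have HZ: "basis_mod H Z ys"
    using basis_mod_span_disjoint[OF I _ dis(2)] ys(3) unfolding H_def Z_def by auto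
  have sub: "subspace smul H" "subspace smul Z" "H \<subseteq> X" "H \<subseteq> Z"
    using HX HZ span_superset[of "H \<union> xs"] span_superset[of "H \<union> ys"]
    unfolding basis_mod_def by (auto simp: H_def Z_def)
  have GZ: "Z \<in> GG smul"
    using GG_commensurable[OF ID GX sub(2,1,3,4)] HX HZ xs(1) ys(1) unfolding fin_codim_def by blast
  have S: "span (X \<union> Z) = span (A \<union> ys)" "span (Z \<union> X) = span (((A - xs) \<union> ys) \<union> xs)"
    unfolding SA[symmetric] Z_def span_Un_span_left span_Un_span_right using xs(3)
    by (auto intro!: arg_cong[where f = span])
  have XS: "basis_mod X (span (X \<union> Z)) ys"
    using basis_mod_span_disjoint[OF I _ dis(3)] ys(3) SA S(1) by auto
  have ZS: "basis_mod Z (span (X \<union> Z)) xs"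
    using basis_mod_span_disjoint[OF I _ dis(4)] xs(3) ys(3) S(2) unfolding Z_def
    by (auto simp: Un_commute)
  have "codim X (span (X \<union> Z)) = n" "codim Z (span (X \<union> Z)) = n"
    using codim_eq_card[OF X ys(1) XS] codim_eq_card[OF sub(2) xs(1) ZS] xs(2) ys(2) by auto
  moreover have "equicodim X Z"
    using XS ZS xs(1) ys(1) calculation unfolding equicodim_def fin_codim_def by auto
  ultimately show ?thesis using that GZ by blast
qed

subsection \<open>Connected components\<close>

lemma component_eq:
  assumes ID: "infinite_dimensional smul" and GX: "X \<in> GG smul"
  shows "component smul X = {Y \<in> GG smul. \<exists>d. qdim smul (ssum X Y) X d \<and> qdim smul (ssum X Y) Y d}"
  using component_imp_equicodim[OF GX] equicodim_imp_path[OF ID _ GX] equicodim_iff_qdim GX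
  unfolding component_def GG_def by blast

lemma component_equicodim_iff:
  assumes ID: "infinite_dimensional smul" and GX: "X \<in> GG smul"
  shows "Y \<in> component smul X \<longleftrightarrow> Y \<in> GG smul \<and> equicodim X Y"
  using component_imp_equicodim[OF GX] equicodim_imp_path[OF ID _ GX] GX
  unfolding component_def by blast

lemma complement_not_in_component:
  assumes ID: "infinite_dimensional smul" and GX: "X \<in> GG smul"
    and Y: "subspace smul Y" and XY: "ssum X Y = UNIV"
  shows "Y \<notin> component smul X"
proof
  assume "Y \<in> component smul X"
  then have "fin_codim X (span (X \<union> Y))"
    using component_equicodim_iff[OF ID GX] unfolding equicodim_def by blast
  moreover have "span (X \<union> Y) = UNIV" using XY ssum_eq_span[OF _ Y] GX unfolding GG_def by auto
  ultimately show False using GG_not_fin_codim[OF ID GX] by simp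
qed

lemma equicodim_subset_eq:
  assumes X: "subspace smul X" and Y: "subspace smul Y" and YX: "Y \<subseteq> X" and e: "equicodim X Y"
  shows "X = Y"
  using e codim_refl[OF X] codim_eq_0_iff[OF Y] span_Un_subspace_self[OF X YX]
  unfolding equicodim_def by auto

lemma nested_not_in_component:
  assumes ID: "infinite_dimensional smul" and GX: "X \<in> GG smul" and GY: "Y \<in> GG smul"
    and XY: "Y \<subset> X \<or> X \<subset> Y"
  shows "Y \<notin> component smul X"
  using XY equicodim_subset_eq equicodim_sym component_equicodim_iff[OF ID GX] GX GY
  unfolding GG_def by blast

lemma component_unbounded:
  assumes ID: "infinite_dimensional smul" and GX: "X \<in> GG smul"
  shows "\<exists>Y\<in>component smul X. \<exists>Z\<in>component smul X. \<not> dist_le smul Y Z n"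
proof -
  obtain Z where Z: "Z \<in> GG smul" "equicodim X Z" "codim X (span (X \<union> Z)) = Suc n"
    using GG_equicodim_at_distance[OF ID GX] by blast
  have "\<not> dist_le smul X Z n"
    using codim_le_path_length[of X] Z(3) GX unfolding dist_le_def GG_def by fastforce
  moreover have "X \<in> component smul X" "Z \<in> component smul X"
    using component_equicodim_iff[OF ID GX] Z unfolding component_def by auto
  ultimately show ?thesis by blast
qed

end

theorem mainTheorem8:
  fixes smul :: "'k::division_ring \<Rightarrow> 'v::ab_group_add \<Rightarrow> 'v"
  assumes "left_vector_space smul"
    and "infinite_dimensional smul"
  shows "(\<exists>X\<in>GG smul. \<exists>Y\<in>GG smul. \<not> (grassmann_edge smul)\<^sup>*\<^sup>* X Y)
    \<and> (\<forall>X\<in>GG smul. component smul X =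
          {Y \<in> GG smul. \<exists>d::nat. qdim smul (ssum X Y) X d \<and> qdim smul (ssum X Y) Y d})
    \<and> (\<forall>X\<in>GG smul. \<forall>Y. subspace smul Y \<and> X \<inter> Y = {0} \<and> ssum X Y = UNIV
          \<longrightarrow> Y \<notin> component smul X)
    \<and> (\<forall>X\<in>GG smul. \<forall>Y\<in>GG smul. Y \<subset> X \<or> X \<subset> Y \<longrightarrow> Y \<notin> component smul X)
    \<and> (\<forall>X\<in>GG smul. \<forall>H. subspace smul H \<and> qdim smul X H 1 \<longrightarrow> H \<in> GG smul)
    \<and> (\<forall>X\<in>GG smul. \<forall>n::nat. \<exists>Y\<in>component smul X. \<exists>Z\<in>component smul X.
          \<not> dist_le smul Y Z n)"
proof -
  interpret left_vs smul by (rule left_vs.intro) (rule assms(1))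
  note ID = assms(2)
  obtain X Y where XY: "X \<in> GG smul" "Y \<in> GG smul" "X \<inter> Y = {0}" "ssum X Y = UNIV"
    using GG_complementary_pair[OF ID] by blast
  have "Y \<notin> component smul X"
    using complement_not_in_component[OF ID XY(1) _ XY(4)] XY(2) unfolding GG_def by blast
  then have "\<exists>X\<in>GG smul. \<exists>Y\<in>GG smul. \<not> (grassmann_edge smul)\<^sup>*\<^sup>* X Y"
    using XY(1,2) unfolding component_def by blast
  then show ?thesis
  proof (intro conjI ballI allI impI)
    fix X Y H n
    assume GX: "X \<in> GG smul"
    show "component smul X =
        {Y \<in> GG smul. \<exists>d::nat. qdim smul (ssum X Y) X d \<and> qdim smul (ssum X Y) Y d}"
      by (rule component_eq[OF ID GX])
    show "Y \<notin> component smul X" if "subspace smul Y \<and> X \<inter> Y = {0} \<and> ssum X Y = UNIV"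
      using complement_not_in_component[OF ID GX] that by blast
    show "Y \<notin> component smul X" if "Y \<in> GG smul" "Y \<subset> X \<or> X \<subset> Y"
      by (rule nested_not_in_component[OF ID GX that])
    show "H \<in> GG smul" if "subspace smul H \<and> qdim smul X H 1"
      using GG_hyperplane[OF ID GX] that by blast
    show "\<exists>Y\<in>component smul X. \<exists>Z\<in>component smul X. \<not> dist_le smul Y Z n"
      by (rule component_unbounded[OF ID GX])
  qed
qed

end
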